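(* Let $T>0$, $\mathbb{U}\subset\mathbb{R}^m$ compact non-empty, and $f:[0,T]\times\mathbb{R}^n\times\mathbb{U}\to\mathbb{R}^n$ continuous and Lipschitz in $x$ uniformly in $(s,u)$. Let $g\in C(\mathbb{R}^n;\mathbb{R})$ and $\mathcal{X}=\{x\,|\,g(x)\le 0\}$. Let $\underline{v}\in C([0,T]\times\mathbb{R}^n;\mathbb{R})$ be a viscosity subsolution of $-v_t+H(t,x,\nabla v)=0$ on $\{(t,x)\in(0,T)\times\mathbb{R}^n\,|\,\underline{v}(t,x)>0\}$ with $\underline{v}(T,\cdot)=\underline{g}$, where $\underline{g}(x)\le 0$ for all $x\in\mathcal{X}$. Let $\overline{\mathcal{G}}(t)=\{x\,|\,\underline{v}(t,x)\le 0\}$ and $0\le t_1\le t_2\le T$. Then for every $\bar{x}\notin\overline{\mathcal{G}}(t_1)$ and every $u\in\mathcal{U}[t_1,t_2]$, $\varphi(t_2;t_1,\bar{x},u)\notin\overline{\mathcal{G}}(t_2)$.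
   Context: For $t\le t'$, $\mathcal{U}[t,t']$ is the set of measurable maps $u:[t,t']\to\mathbb{U}$, and $\varphi(\cdot;t,x,u)$ denotes the unique absolutely continuous solution of $\dot{x}(s)=f(s,x(s),u(s))$ a.e., $x(t)=x$. The Hamiltonian is $H(t,x,p)=\max_{u\in\mathbb{U}}\langle -p,f(t,x,u)\rangle$. For an open $\Omega\subseteq(0,T)\times\mathbb{R}^n$, $v\in C([0,T]\times\mathbb{R}^n;\mathbb{R})$ is a viscosity subsolution of $-v_t+H(t,x,\nabla v)=0$ on $\Omega$ if for every $\xi\in C^1(\Omega;\mathbb{R})$ such that $v-\xi$ has a local maximum at $(t_0,x_0)\in\Omega$, $-\xi_t(t_0,x_0)+H(t_0,x_0,\nabla\xi(t_0,x_0))\le 0$. *)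

theory Defs
  imports "HOL-Analysis.Analysis"
begin

definition abs_continuous_on :: "real \<Rightarrow> real \<Rightarrow> (real \<Rightarrow> 'a::real_normed_vector) \<Rightarrow> bool" where
  "abs_continuous_on a b y \<longleftrightarrow>
     (\<forall>\<epsilon>>0. \<exists>\<delta>>0. \<forall>(k::nat) (c::nat \<Rightarrow> real) (d::nat \<Rightarrow> real).
        (\<forall>i<k. a \<le> c i \<and> c i \<le> d i \<and> d i \<le> b) \<and>
        (\<forall>i<k. \<forall>j<k. i \<noteq> j \<longrightarrow> d i \<le> c j \<or> d j \<le> c i) \<and>
        (\<Sum>i<k. d i - c i) < \<delta>
        \<longrightarrow> (\<Sum>i<k. norm (y (d i) - y (c i))) < \<epsilon>)"

definition controls :: "'m::euclidean_space set \<Rightarrow> real \<Rightarrow> real \<Rightarrow> (real \<Rightarrow> 'm) set" where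
  "controls UU t t' = {u. u \<in> borel_measurable (lebesgue_on {t..t'}) \<and> (\<forall>s\<in>{t..t'}. u s \<in> UU)}"

definition is_trajectory ::
  "(real \<Rightarrow> 'n::euclidean_space \<Rightarrow> 'm \<Rightarrow> 'n) \<Rightarrow> real \<Rightarrow> real \<Rightarrow> 'n \<Rightarrow> (real \<Rightarrow> 'm) \<Rightarrow> (real \<Rightarrow> 'n) \<Rightarrow> bool" where
  "is_trajectory f t t' x u y \<longleftrightarrow>
     abs_continuous_on t t' y \<and> y t = x \<and>
     (AE s in lebesgue_on {t..t'}. (y has_vector_derivative f s (y s) (u s)) (at s within {t..t'}))"

definition hamiltonian ::
  "(real \<Rightarrow> 'n::euclidean_space \<Rightarrow> 'm \<Rightarrow> 'n) \<Rightarrow> 'm set \<Rightarrow> real \<Rightarrow> 'n \<Rightarrow> 'n \<Rightarrow> real" where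
  "hamiltonian f UU t x p = (SUP u\<in>UU. inner (- p) (f t x u))"

definition C1_with_derivs ::
  "(real \<times> 'n::euclidean_space) set \<Rightarrow> (real \<times> 'n \<Rightarrow> real) \<Rightarrow> (real \<times> 'n \<Rightarrow> real) \<Rightarrow> (real \<times> 'n \<Rightarrow> 'n) \<Rightarrow> bool" where
  "C1_with_derivs \<Omega> \<xi> \<xi>t \<xi>g \<longleftrightarrow>
     continuous_on \<Omega> \<xi>t \<and> continuous_on \<Omega> \<xi>g \<and>
     (\<forall>z\<in>\<Omega>. (\<xi> has_derivative (\<lambda>(h, k). \<xi>t z * h + inner (\<xi>g z) k)) (at z))"

definition viscosity_subsolution ::
  "(real \<Rightarrow> 'n::euclidean_space \<Rightarrow> 'm \<Rightarrow> 'n) \<Rightarrow> 'm set \<Rightarrow> (real \<times> 'n) set \<Rightarrow> (real \<Rightarrow> 'n \<Rightarrow> real) \<Rightarrow> bool" where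
  "viscosity_subsolution f UU \<Omega> v \<longleftrightarrow>
     (\<forall>\<xi> \<xi>t \<xi>g t0 x0. C1_with_derivs \<Omega> \<xi> \<xi>t \<xi>g \<and> (t0, x0) \<in> \<Omega> \<and>
        (\<exists>e>0. \<forall>z\<in>\<Omega> \<inter> ball (t0, x0) e. v (fst z) (snd z) - \<xi> z \<le> v t0 x0 - \<xi> (t0, x0))
        \<longrightarrow> - \<xi>t (t0, x0) + hamiltonian f UU t0 x0 (\<xi>g (t0, x0)) \<le> 0)"

end

theory Submission
  imports Defs
begin

text \<open>Along a trajectory \<open>y\<close>, the value \<open>v s (y s)\<close> of the subsolution cannot decrease as long as
  \<open>(s, y s)\<close> stays in the open region where the subsolution inequality is assumed. Were
  \<open>v a (y a) > v b (y b)\<close>, doubling the variables gives a maximum \<open>((t, x), s\<^sub>0)\<close> of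
  \<open>v t x - \<bar>x - y s\<bar>\<^sup>2 / \<epsilon> - (t - s)\<^sup>2 / \<beta> + c s\<close> over a compact neighbourhood of the graph times \<open>[a, b]\<close>.
  The choice of \<open>c\<close> rules out \<open>s\<^sub>0 = b\<close>. For \<open>s\<^sub>0 < b\<close>, the viscosity inequality at \<open>(t, x)\<close>, the
  Lipschitz bound on \<open>f\<close> and the closeness of \<open>(t, x)\<close> to \<open>(s\<^sub>0, y s\<^sub>0)\<close> give the penalised function a
  positive derivative almost everywhere to the right of \<open>s\<^sub>0\<close>; since \<open>y\<close> is absolutely continuous,
  Luzin's property (N) turns this into strict increase, contradicting maximality. Finally, a
  trajectory entering \<open>{x. v t\<^sub>2 x \<le> 0}\<close> would make \<open>v s (y s)\<close> decrease just before its first zero.\<close>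

section \<open>Absolute continuity and Luzin's property (N)\<close>

lemma abs_continuous_onD:
  assumes "abs_continuous_on a b y" "e > 0"
  shows "\<exists>\<delta>>0. \<forall>F c d. finite F \<and> (\<forall>K\<in>F. a \<le> c K \<and> c K \<le> d K \<and> d K \<le> b) \<and>
    (\<forall>K\<in>F. \<forall>K'\<in>F. K \<noteq> K' \<longrightarrow> d K \<le> c K' \<or> d K' \<le> c K) \<and>
    (\<Sum>K\<in>F. d K - c K) < \<delta> \<longrightarrow> (\<Sum>K\<in>F. norm (y (d K) - y (c K))) < e"
proof -
  obtain \<delta> where "\<delta> > 0" and \<delta>: "\<forall>(k::nat) c d. (\<forall>i<k. a \<le> c i \<and> c i \<le> d i \<and> d i \<le> b) \<and>
      (\<forall>i<k. \<forall>j<k. i \<noteq> j \<longrightarrow> d i \<le> c j \<or> d j \<le> c i) \<and>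
      (\<Sum>i<k. d i - c i) < \<delta> \<longrightarrow> (\<Sum>i<k. norm (y (d i) - y (c i))) < e"
    using assms unfolding abs_continuous_on_def by blast
  show ?thesis
  proof (intro exI[of _ \<delta>] conjI allI impI, fact, elim conjE)
    fix F c d
    assume "finite F" and F: "\<forall>K\<in>F. a \<le> c K \<and> c K \<le> d K \<and> d K \<le> b"
      "\<forall>K\<in>F. \<forall>K'\<in>F. K \<noteq> K' \<longrightarrow> d K \<le> c K' \<or> d K' \<le> c K" "(\<Sum>K\<in>F. d K - c K) < \<delta>"
    obtain h where h: "bij_betw h {..<card F} F"
      using ex_bij_betw_nat_finite[OF \<open>finite F\<close>] by (auto simp: atLeast0LessThan)
    have reindex: "(\<Sum>i<card F. \<phi> (h i)) = (\<Sum>K\<in>F. \<phi> K)" for \<phi> :: "_ \<Rightarrow> real"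
      using sum.reindex_bij_betw[OF h] .
    have "(\<Sum>i<card F. norm (y (d (h i)) - y (c (h i)))) < e"
    proof (rule \<delta>[rule_format], intro conjI)
      show "\<forall>i<card F. a \<le> c (h i) \<and> c (h i) \<le> d (h i) \<and> d (h i) \<le> b"
        using F(1) bij_betwE[OF h] by blast
      show "\<forall>i<card F. \<forall>j<card F. i \<noteq> j \<longrightarrow> d (h i) \<le> c (h j) \<or> d (h j) \<le> c (h i)"
        using F(2) h unfolding bij_betw_def inj_on_def by blast
      show "(\<Sum>i<card F. d (h i) - c (h i)) < \<delta>"
        using F(3) reindex[of "\<lambda>K. d K - c K"] by simp
    qed
    then show "(\<Sum>K\<in>F. norm (y (d K) - y (c K))) < e"
      using reindex[of "\<lambda>K. norm (y (d K) - y (c K))"] by simp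
  qed
qed

lemma abs_continuous_on_imp_continuous_on:
  assumes "abs_continuous_on a b y"
  shows "continuous_on {a..b} y"
  unfolding continuous_on_iff
proof (intro ballI allI impI)
  fix x e :: real
  assume x: "x \<in> {a..b}" and "0 < e"
  obtain \<delta> where "\<delta> > 0" and \<delta>: "\<forall>(F :: nat set) c d. finite F \<and>
      (\<forall>K\<in>F. a \<le> c K \<and> c K \<le> d K \<and> d K \<le> b) \<and>
      (\<forall>K\<in>F. \<forall>K'\<in>F. K \<noteq> K' \<longrightarrow> d K \<le> c K' \<or> d K' \<le> c K) \<and>
      (\<Sum>K\<in>F. d K - c K) < \<delta> \<longrightarrow> (\<Sum>K\<in>F. norm (y (d K) - y (c K))) < e"
    using abs_continuous_onD[OF assms \<open>0 < e\<close>] by blast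
  show "\<exists>\<delta>>0. \<forall>x'\<in>{a..b}. dist x' x < \<delta> \<longrightarrow> dist (y x') (y x) < e"
  proof (intro exI[of _ \<delta>] conjI ballI impI)
    fix x' assume x': "x' \<in> {a..b}" "dist x' x < \<delta>"
    have "(\<Sum>K\<in>{0::nat}. norm (y (max x x') - y (min x x'))) < e"
      using x x' by (intro \<delta>[rule_format]) (auto simp: dist_real_def)
    moreover have "norm (y (max x x') - y (min x x')) = dist (y x') (y x)"
      by (cases "x \<le> x'") (simp_all add: dist_norm norm_minus_commute)
    ultimately show "dist (y x') (y x) < e"
      by simp
  qed (fact \<open>\<delta> > 0\<close>)
qed

lemma abs_continuous_on_subinterval:
  assumes "abs_continuous_on a b y" "a \<le> a'" "b' \<le> b"
  shows "abs_continuous_on a' b' y"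
  unfolding abs_continuous_on_def
proof (intro allI impI)
  fix e :: real
  assume "e > 0"
  obtain \<delta> where "\<delta> > 0" and \<delta>: "\<forall>(F :: nat set) c d. finite F \<and>
      (\<forall>K\<in>F. a \<le> c K \<and> c K \<le> d K \<and> d K \<le> b) \<and>
      (\<forall>K\<in>F. \<forall>K'\<in>F. K \<noteq> K' \<longrightarrow> d K \<le> c K' \<or> d K' \<le> c K) \<and>
      (\<Sum>K\<in>F. d K - c K) < \<delta> \<longrightarrow> (\<Sum>K\<in>F. norm (y (d K) - y (c K))) < e"
    using abs_continuous_onD[OF assms(1) \<open>e > 0\<close>] by blast
  show "\<exists>\<delta>>0. \<forall>(k::nat) c d. (\<forall>i<k. a' \<le> c i \<and> c i \<le> d i \<and> d i \<le> b') \<and>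
      (\<forall>i<k. \<forall>j<k. i \<noteq> j \<longrightarrow> d i \<le> c j \<or> d j \<le> c i) \<and>
      (\<Sum>i<k. d i - c i) < \<delta> \<longrightarrow> (\<Sum>i<k. norm (y (d i) - y (c i))) < e"
  proof (intro exI[of _ \<delta>] conjI allI impI)
    fix k :: nat and c d :: "nat \<Rightarrow> real"
    assume k: "(\<forall>i<k. a' \<le> c i \<and> c i \<le> d i \<and> d i \<le> b') \<and>
      (\<forall>i<k. \<forall>j<k. i \<noteq> j \<longrightarrow> d i \<le> c j \<or> d j \<le> c i) \<and> (\<Sum>i<k. d i - c i) < \<delta>"
    have "\<forall>i\<in>{..<k}. a \<le> c i \<and> c i \<le> d i \<and> d i \<le> b"
      using k assms(2,3) by (meson lessThan_iff order_trans)
    moreover have "\<forall>i\<in>{..<k}. \<forall>j\<in>{..<k}. i \<noteq> j \<longrightarrow> d i \<le> c j \<or> d j \<le> c i"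
      using k by (simp add: lessThan_iff)
    ultimately show "(\<Sum>i<k. norm (y (d i) - y (c i))) < e"
      using k by (intro \<delta>[rule_format, of "{..<k}" c d] conjI) simp_all
  qed (fact \<open>\<delta> > 0\<close>)
qed

lemma abs_continuous_on_increment_le:
  fixes G :: "real \<Rightarrow> real"
  assumes ac: "abs_continuous_on a b y" and "A \<ge> 0" "B \<ge> 0"
    and incr: "\<And>s t. a \<le> s \<Longrightarrow> s \<le> t \<Longrightarrow> t \<le> b \<Longrightarrow> \<bar>G t - G s\<bar> \<le> A * norm (y t - y s) + B * (t - s)"
  shows "abs_continuous_on a b G"
  unfolding abs_continuous_on_def
proof (intro allI impI)
  fix e :: real
  assume "e > 0"
  then have "e / (2 * (A + 1)) > 0"
    using \<open>A \<ge> 0\<close> by simp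
  then obtain \<delta> where "\<delta> > 0" and \<delta>: "\<forall>(F :: nat set) c d. finite F \<and>
      (\<forall>K\<in>F. a \<le> c K \<and> c K \<le> d K \<and> d K \<le> b) \<and>
      (\<forall>K\<in>F. \<forall>K'\<in>F. K \<noteq> K' \<longrightarrow> d K \<le> c K' \<or> d K' \<le> c K) \<and>
      (\<Sum>K\<in>F. d K - c K) < \<delta> \<longrightarrow> (\<Sum>K\<in>F. norm (y (d K) - y (c K))) < e / (2 * (A + 1))"
    by (rule exE[OF abs_continuous_onD[OF ac]]) blast
  define \<delta>' where "\<delta>' = min \<delta> (e / (2 * (B + 1)))"
  show "\<exists>\<delta>>0. \<forall>(k::nat) c d. (\<forall>i<k. a \<le> c i \<and> c i \<le> d i \<and> d i \<le> b) \<and>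
      (\<forall>i<k. \<forall>j<k. i \<noteq> j \<longrightarrow> d i \<le> c j \<or> d j \<le> c i) \<and>
      (\<Sum>i<k. d i - c i) < \<delta> \<longrightarrow> (\<Sum>i<k. norm (G (d i) - G (c i))) < e"
  proof (intro exI[of _ \<delta>'] conjI allI impI)
    show "\<delta>' > 0"
      using \<open>\<delta> > 0\<close> \<open>e > 0\<close> \<open>B \<ge> 0\<close> by (simp add: \<delta>'_def)
    fix k :: nat and c d :: "nat \<Rightarrow> real"
    assume k: "(\<forall>i<k. a \<le> c i \<and> c i \<le> d i \<and> d i \<le> b) \<and>
      (\<forall>i<k. \<forall>j<k. i \<noteq> j \<longrightarrow> d i \<le> c j \<or> d j \<le> c i) \<and> (\<Sum>i<k. d i - c i) < \<delta>'"
    have y_small: "(\<Sum>i<k. norm (y (d i) - y (c i))) < e / (2 * (A + 1))"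
      using k by (intro \<delta>[rule_format, of "{..<k}"]) (simp add: \<delta>'_def)
    have t_small: "(\<Sum>i<k. d i - c i) < e / (2 * (B + 1))"
      using k by (simp add: \<delta>'_def)
    have "(\<Sum>i<k. norm (G (d i) - G (c i))) \<le> (\<Sum>i<k. A * norm (y (d i) - y (c i)) + B * (d i - c i))"
      using k incr by (intro sum_mono) simp
    also have "\<dots> = A * (\<Sum>i<k. norm (y (d i) - y (c i))) + B * (\<Sum>i<k. d i - c i)"
      by (simp add: sum.distrib sum_distrib_left)
    also have "\<dots> \<le> A * (e / (2 * (A + 1))) + B * (e / (2 * (B + 1)))"
      using y_small t_small \<open>A \<ge> 0\<close> \<open>B \<ge> 0\<close> by (intro add_mono mult_left_mono) auto
    also have "\<dots> < e / 2 + e / 2"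
      using \<open>A \<ge> 0\<close> \<open>B \<ge> 0\<close> \<open>e > 0\<close> by (intro add_strict_mono) (simp_all add: field_simps)
    finally show "(\<Sum>i<k. norm (G (d i) - G (c i))) < e" by simp
  qed
qed

lemma Icc_interior_disjoint_separated:
  fixes l r l' r' :: real
  assumes "K = {l..r}" "K' = {l'..r'}" "l < r" "l' < r'" "interior K \<inter> interior K' = {}"
    and "x \<in> K" "x' \<in> K" "z \<in> K'" "z' \<in> K'"
  shows "max x x' \<le> min z z' \<or> max z z' \<le> min x x'"
proof -
  have "r \<le> l' \<or> r' \<le> l"
  proof (rule ccontr)
    assume "\<not> (r \<le> l' \<or> r' \<le> l)"
    then have "(max l l' + min r r') / 2 \<in> interior K \<inter> interior K'"
      using assms(1-4) by (auto simp: max_def min_def)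
    with assms(5) show False
      by blast
  qed
  with assms(1,2,6-9) show ?thesis
    by auto
qed

lemma measure_Union_interior_disjoint:
  assumes "finite \<F>" "\<And>K. K \<in> \<F> \<Longrightarrow> convex K \<and> K \<in> lmeasurable"
    and "pairwise (\<lambda>K K'. interior K \<inter> interior K' = {}) \<F>"
  shows "measure lebesgue (\<Union>\<F>) = (\<Sum>K\<in>\<F>. measure lebesgue K)"
proof (rule measure_negligible_finite_Union[OF assms(1)])
  show "\<And>K. K \<in> \<F> \<Longrightarrow> K \<in> lmeasurable"
    using assms(2) by blast
  show "pairwise (\<lambda>K K'. negligible (K \<inter> K')) \<F>"
    using assms(2,3) unfolding pairwise_def by (metis convex_Int interior_Int negligible_convex_interior)
qed

lemma abs_continuous_on_image_measure:
  fixes G :: "real \<Rightarrow> real"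
  assumes ac: "abs_continuous_on \<alpha> \<beta> G" and "e > 0"
  shows "\<exists>\<delta>>0. \<forall>\<F>. finite \<F> \<and> (\<forall>K\<in>\<F>. \<exists>l r. l < r \<and> K = {l..r}) \<and> \<Union>\<F> \<subseteq> {\<alpha>..\<beta>} \<and>
    pairwise (\<lambda>K K'. interior K \<inter> interior K' = {}) \<F> \<and> measure lebesgue (\<Union>\<F>) < \<delta> \<longrightarrow>
    measure lebesgue (\<Union>K\<in>\<F>. G ` K) < e"
proof -
  obtain \<delta> where "\<delta> > 0" and \<delta>: "\<forall>(F :: real set set) c d. finite F \<and>
      (\<forall>K\<in>F. \<alpha> \<le> c K \<and> c K \<le> d K \<and> d K \<le> \<beta>) \<and>
      (\<forall>K\<in>F. \<forall>K'\<in>F. K \<noteq> K' \<longrightarrow> d K \<le> c K' \<or> d K' \<le> c K) \<and>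
      (\<Sum>K\<in>F. d K - c K) < \<delta> \<longrightarrow> (\<Sum>K\<in>F. norm (G (d K) - G (c K))) < e"
    using abs_continuous_onD[OF ac \<open>e > 0\<close>] by blast
  show ?thesis
  proof (intro exI[of _ \<delta>] conjI allI impI, fact, elim conjE)
    fix \<F> :: "real set set"
    assume fin: "finite \<F>" and Icc: "\<forall>K\<in>\<F>. \<exists>l r. l < r \<and> K = {l..r}"
      and sub: "\<Union>\<F> \<subseteq> {\<alpha>..\<beta>}" and disj: "pairwise (\<lambda>K K'. interior K \<inter> interior K' = {}) \<F>"
      and small: "measure lebesgue (\<Union>\<F>) < \<delta>"
    have image_compact: "compact (G ` K)" if "K \<in> \<F>" for K
    proof (rule compact_continuous_image)
      show "continuous_on K G"
        using abs_continuous_on_imp_continuous_on[OF ac] sub that by (blast intro: continuous_on_subset)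
      show "compact K"
        using Icc that by auto
    qed
    then have image_meas: "G ` K \<in> lmeasurable" if "K \<in> \<F>" for K
      using that by (simp add: lmeasurable_compact)
    have "\<exists>p q. p \<in> K \<and> q \<in> K \<and> G ` K \<subseteq> {G p..G q}" if K: "K \<in> \<F>" for K
    proof -
      have "G ` K \<noteq> {}"
        using Icc K by fastforce
      then obtain p q where "p \<in> K" "\<forall>x\<in>K. G p \<le> G x" "q \<in> K" "\<forall>x\<in>K. G x \<le> G q"
        using compact_attains_inf[OF image_compact[OF K]] compact_attains_sup[OF image_compact[OF K]]
        by auto
      then show ?thesis
        by (intro exI[of _ p] exI[of _ q]) auto
    qed
    then obtain p q where pq: "\<And>K. K \<in> \<F> \<Longrightarrow> p K \<in> K \<and> q K \<in> K \<and> G ` K \<subseteq> {G (p K)..G (q K)}"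
      by metis
    define c where "c K = min (p K) (q K)" for K
    define d where "d K = max (p K) (q K)" for K
    have "measure lebesgue (\<Union>K\<in>\<F>. G ` K) \<le> (\<Sum>K\<in>\<F>. measure lebesgue (G ` K))"
      using fin image_meas by (intro measure_UNION_le) auto
    also have "\<dots> \<le> (\<Sum>K\<in>\<F>. norm (G (d K) - G (c K)))"
    proof (rule sum_mono)
      fix K assume "K \<in> \<F>"
      then have "measure lebesgue (G ` K) \<le> measure lebesgue {G (p K)..G (q K)}"
        using pq image_meas by (intro measure_mono_fmeasurable) auto
      also have "\<dots> = norm (G (d K) - G (c K))"
        using pq[OF \<open>K \<in> \<F>\<close>] by (auto simp: c_def d_def min_def max_def)
      finally show "measure lebesgue (G ` K) \<le> norm (G (d K) - G (c K))" .
    qed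
    also have "\<dots> < e"
    proof (rule \<delta>[rule_format], intro conjI)
      show "\<forall>K\<in>\<F>. \<alpha> \<le> c K \<and> c K \<le> d K \<and> d K \<le> \<beta>"
        using pq sub by (fastforce simp: c_def d_def)
      show "\<forall>K\<in>\<F>. \<forall>K'\<in>\<F>. K \<noteq> K' \<longrightarrow> d K \<le> c K' \<or> d K' \<le> c K"
      proof (intro ballI impI)
        fix K K' assume K: "K \<in> \<F>" "K' \<in> \<F>" "K \<noteq> K'"
        obtain l r l' r' where "l < r" "K = {l..r}" "l' < r'" "K' = {l'..r'}"
          using Icc K(1,2) by metis
        moreover have "interior K \<inter> interior K' = {}"
          using disj K unfolding pairwise_def by blast
        ultimately show "d K \<le> c K' \<or> d K' \<le> c K"
          using pq[OF K(1)] pq[OF K(2)] unfolding c_def d_def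
          by (intro Icc_interior_disjoint_separated[of K l r K' l' r']) simp_all
      qed
      show "finite \<F>"
        by (fact fin)
      have "(\<Sum>K\<in>\<F>. d K - c K) \<le> (\<Sum>K\<in>\<F>. measure lebesgue K)"
      proof (rule sum_mono)
        fix K assume K: "K \<in> \<F>"
        then obtain l r where "l < r" "K = {l..r}"
          using Icc by blast
        then show "d K - c K \<le> measure lebesgue K"
          using pq[OF K] by (auto simp: c_def d_def)
      qed
      also have "\<dots> = measure lebesgue (\<Union>\<F>)"
        using Icc by (intro measure_Union_interior_disjoint[symmetric] fin disj) auto
      finally show "(\<Sum>K\<in>\<F>. d K - c K) < \<delta>"
        using small by linarith
    qed
    finally show "measure lebesgue (\<Union>K\<in>\<F>. G ` K) < e" .
  qed
qed

lemma abs_continuous_on_negligible_image: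
  fixes G :: "real \<Rightarrow> real"
  assumes ac: "abs_continuous_on \<alpha> \<beta> G" and E: "E \<subseteq> {\<alpha>..\<beta>}" "negligible E"
  shows "negligible (G ` E)"
proof (cases "\<alpha> < \<beta>")
  case False
  with E(1) have "E \<subseteq> {\<alpha>}"
    by fastforce
  then have "G ` E \<subseteq> {G \<alpha>}"
    by auto
  then show ?thesis
    using negligible_subset negligible_sing by metis
next
  case True
  show ?thesis
    unfolding negligible_outer_le
  proof (intro allI impI)
    fix e :: real
    assume "e > 0"
    then obtain \<delta> where "\<delta> > 0" and \<delta>: "\<forall>\<F>. finite \<F> \<and> (\<forall>K\<in>\<F>. \<exists>l r. l < r \<and> K = {l..r}) \<and>
        \<Union>\<F> \<subseteq> {\<alpha>..\<beta>} \<and> pairwise (\<lambda>K K'. interior K \<inter> interior K' = {}) \<F> \<and>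
        measure lebesgue (\<Union>\<F>) < \<delta> \<longrightarrow> measure lebesgue (\<Union>K\<in>\<F>. G ` K) < e"
      using abs_continuous_on_image_measure[OF ac] by blast
    have "E \<in> lmeasurable" "E \<subseteq> cbox \<alpha> \<beta>" "\<delta> / 2 > 0"
      using E \<open>\<delta> > 0\<close> by (auto simp: negligible_imp_measurable)
    then obtain \<D> where "countable \<D>"
      and \<D>: "\<And>K. K \<in> \<D> \<Longrightarrow> K \<subseteq> cbox \<alpha> \<beta> \<and> K \<noteq> {} \<and> (\<exists>c d. K = cbox c d)"
      and disj: "pairwise (\<lambda>A B. interior A \<inter> interior B = {}) \<D>"
      and nondegenerate: "\<And>K. K \<in> \<D> \<Longrightarrow> box \<alpha> \<beta> \<noteq> {} \<Longrightarrow> interior K \<noteq> {}"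
      and cover: "E \<subseteq> \<Union>\<D>" and "\<Union>\<D> \<in> lmeasurable"
      and "measure lebesgue (\<Union>\<D>) \<le> measure lebesgue E + \<delta> / 2"
      by (rule measurable_outer_intervals_bounded) blast
    then have \<D>_small: "measure lebesgue (\<Union>\<D>) < \<delta>"
      using E(2) \<open>\<delta> > 0\<close> by (simp add: negligible_imp_measure0)
    have Icc: "\<exists>l r. l < r \<and> K = {l..r}" if K: "K \<in> \<D>" for K
    proof -
      obtain l r where "K = {l..r}"
        using \<D>[OF K] by (auto simp: cbox_interval)
      moreover have "interior K \<noteq> {}"
        using nondegenerate[OF K] True by simp
      ultimately show ?thesis
        by auto
    qed
    have image_meas: "G ` K \<in> lmeasurable" if "K \<in> \<D>" for K
    proof (rule lmeasurable_compact, rule compact_continuous_image)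
      show "continuous_on K G"
        using abs_continuous_on_imp_continuous_on[OF ac] \<D>[OF that] by (auto intro: continuous_on_subset)
      show "compact K"
        using \<D>[OF that] by auto
    qed
    have \<D>_sub: "K \<subseteq> {\<alpha>..\<beta>}" if "K \<in> \<D>" for K
      using \<D>[OF that] by (simp add: cbox_interval)
    have bound: "measure lebesgue (\<Union>K\<in>\<F>. G ` K) \<le> e" if \<F>: "\<F> \<subseteq> \<D>" "finite \<F>" for \<F>
    proof (rule less_imp_le, rule \<delta>[rule_format], intro conjI)
      have "measure lebesgue (\<Union>\<F>) \<le> measure lebesgue (\<Union>\<D>)"
      proof (rule measure_mono_fmeasurable)
        show "\<Union>\<F> \<in> sets lebesgue"
        proof (rule sets.finite_Union[OF \<F>(2)], rule subsetI)
          fix K assume "K \<in> \<F>"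
          then obtain l r where "K = {l..r}"
            using \<F>(1) Icc by blast
          then show "K \<in> sets lebesgue"
            by simp
        qed
        show "\<Union>\<F> \<subseteq> \<Union>\<D>"
          using \<F>(1) by blast
      qed (fact \<open>\<Union>\<D> \<in> lmeasurable\<close>)
      then show "measure lebesgue (\<Union>\<F>) < \<delta>"
        using \<D>_small by linarith
      show "\<Union>\<F> \<subseteq> {\<alpha>..\<beta>}"
        using \<F>(1) \<D>_sub by blast
      show "pairwise (\<lambda>K K'. interior K \<inter> interior K' = {}) \<F>"
        using pairwise_subset[OF disj \<F>(1)] .
      show "\<forall>K\<in>\<F>. \<exists>l r. l < r \<and> K = {l..r}"
        using \<F>(1) Icc by blast
    qed (fact \<F>(2))
    have "(\<Union>K\<in>\<D>. G ` K) \<in> lmeasurable"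
      by (rule fmeasurable_UN_bound[OF \<open>countable \<D>\<close> image_meas bound])
    moreover have "measure lebesgue (\<Union>K\<in>\<D>. G ` K) \<le> e"
      by (rule measure_UN_bound[OF \<open>countable \<D>\<close> image_meas bound])
    moreover have "G ` E \<subseteq> (\<Union>K\<in>\<D>. G ` K)"
      using cover by blast
    ultimately show "\<exists>T. G ` E \<subseteq> T \<and> T \<in> lmeasurable \<and> measure lebesgue T \<le> e"
      by blast
  qed
qed

section \<open>Monotonicity from a positive derivative almost everywhere\<close>

text \<open>If \<open>G\<close> decreased, a level strictly between \<open>G \<beta>\<close> and \<open>G \<alpha>\<close> missing from the negligible set
  \<open>G ` E\<close> would be crossed downwards for the last time at a point outside \<open>E\<close>, where the
  derivative is positive.\<close>

lemma continuous_on_deriv_pos_imp_le: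
  fixes G :: "real \<Rightarrow> real"
  assumes "\<alpha> \<le> \<beta>" and cont: "continuous_on {\<alpha>..\<beta>} G" and "negligible (G ` E)"
    and der: "\<And>s. s \<in> {\<alpha>..<\<beta>} \<Longrightarrow> s \<notin> E \<Longrightarrow> \<exists>g>0. (G has_real_derivative g) (at s within {\<alpha>..\<beta>})"
  shows "G \<alpha> \<le> G \<beta>"
proof (rule ccontr)
  assume "\<not> G \<alpha> \<le> G \<beta>"
  then have "\<not> negligible {G \<beta><..<G \<alpha>}"
    using negligible_interval(2)[of "G \<beta>" "G \<alpha>"] by (simp add: box_real)
  then obtain c where c: "c \<in> {G \<beta><..<G \<alpha>}" "c \<notin> G ` E"
    using \<open>negligible (G ` E)\<close> negligible_subset by (metis subsetI)
  define S where "S = {\<alpha>..\<beta>} \<inter> G -` {c..}"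
  have "closed S"
    unfolding S_def by (rule continuous_closed_preimage[OF cont]) auto
  moreover have "\<alpha> \<in> S" "bdd_above S"
    using c \<open>\<alpha> \<le> \<beta>\<close> unfolding S_def by (auto intro: bdd_aboveI[of _ \<beta>])
  ultimately have "Sup S \<in> S" and Sup_ge: "\<And>x. x \<in> S \<Longrightarrow> x \<le> Sup S"
    by (auto intro: closed_contains_Sup cSup_upper)
  define s where "s = Sup S"
  have s: "s \<in> {\<alpha>..\<beta>}" "c \<le> G s"
    using \<open>Sup S \<in> S\<close> by (auto simp: S_def s_def)
  then have "s < \<beta>"
    using c by (cases "s = \<beta>") auto
  have below: "G x < c" if "x \<in> {\<alpha>..\<beta>}" "s < x" for x
    using Sup_ge[of x] that unfolding S_def s_def by force
  have "G s = c"
  proof (rule ccontr)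
    assume "G s \<noteq> c"
    with s have "G s - c > 0"
      by simp
    then obtain d where "d > 0" and d: "\<And>x. x \<in> {\<alpha>..\<beta>} \<Longrightarrow> dist x s < d \<Longrightarrow> dist (G x) (G s) < G s - c"
      using cont s(1) unfolding continuous_on_iff by metis
    define x where "x = min \<beta> (s + d / 2)"
    have x: "x \<in> {\<alpha>..\<beta>}" "s < x" "dist x s < d"
      using s \<open>s < \<beta>\<close> \<open>d > 0\<close> by (auto simp: x_def dist_real_def)
    from d[OF x(1,3)] below[OF x(1,2)] show False
      by (simp add: dist_real_def)
  qed
  with c(2) have "s \<notin> E"
    by auto
  then obtain g where "g > 0" "(G has_real_derivative g) (at s within {\<alpha>..\<beta>})"
    using der s(1) \<open>s < \<beta>\<close> by auto
  then obtain d where "d > 0" and d: "\<And>h. h > 0 \<Longrightarrow> s + h \<in> {\<alpha>..\<beta>} \<Longrightarrow> h < d \<Longrightarrow> G s < G (s + h)"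
    using has_real_derivative_pos_inc_right by blast
  define h where "h = min (d / 2) (\<beta> - s)"
  have h: "h > 0" "s + h \<in> {\<alpha>..\<beta>}" "h < d"
    using \<open>d > 0\<close> s(1) \<open>s < \<beta>\<close> by (auto simp: h_def)
  from d[OF h] below[OF h(2)] h(1) \<open>G s = c\<close> show False
    by simp
qed

lemma abs_continuous_on_deriv_gt_imp_le:
  fixes G :: "real \<Rightarrow> real"
  assumes "\<alpha> \<le> \<beta>" and ac: "abs_continuous_on \<alpha> \<beta> G" and "negligible E"
    and der: "\<And>s. s \<in> {\<alpha>..<\<beta>} \<Longrightarrow> s \<notin> E \<Longrightarrow> \<exists>g>k. (G has_real_derivative g) (at s within {\<alpha>..\<beta>})"
  shows "G \<alpha> + k * (\<beta> - \<alpha>) \<le> G \<beta>"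
proof -
  define H where "H s = G s - k * s" for s
  have ac_H: "abs_continuous_on \<alpha> \<beta> H"
  proof (rule abs_continuous_on_increment_le[OF ac, of 1 "\<bar>k\<bar>"])
    fix s t :: real
    assume "s \<le> t"
    have "H t - H s = (G t - G s) - k * (t - s)"
      by (simp add: H_def algebra_simps)
    then show "\<bar>H t - H s\<bar> \<le> 1 * norm (G t - G s) + \<bar>k\<bar> * (t - s)"
      using abs_triangle_ineq4[of "G t - G s" "k * (t - s)"] \<open>s \<le> t\<close> by (simp add: abs_mult)
  qed auto
  have "H \<alpha> \<le> H \<beta>"
  proof (rule continuous_on_deriv_pos_imp_le[OF \<open>\<alpha> \<le> \<beta>\<close>])
    show "continuous_on {\<alpha>..\<beta>} H"
      by (rule abs_continuous_on_imp_continuous_on[OF ac_H])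
    show "negligible (H ` (E \<inter> {\<alpha>..\<beta>}))"
      using \<open>negligible E\<close> by (intro abs_continuous_on_negligible_image[OF ac_H]) (auto intro: negligible_Int)
    fix s assume "s \<in> {\<alpha>..<\<beta>}" "s \<notin> E \<inter> {\<alpha>..\<beta>}"
    then obtain g where "g > k" "(G has_real_derivative g) (at s within {\<alpha>..\<beta>})"
      using der by auto
    then have "(H has_real_derivative g - k) (at s within {\<alpha>..\<beta>})"
      unfolding H_def by (auto intro!: derivative_eq_intros)
    with \<open>g > k\<close> show "\<exists>g>0. (H has_real_derivative g) (at s within {\<alpha>..\<beta>})"
      by (intro exI[of _ "g - k"]) simp
  qed
  then show ?thesis
    by (simp add: H_def algebra_simps)
qed

section \<open>The doubling-of-variables penalisation\<close>

definition doubling_penalty :: "real \<Rightarrow> real \<Rightarrow> real \<times> 'a::real_normed_vector \<Rightarrow> real \<times> 'a \<Rightarrow> real" where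
  "doubling_penalty \<epsilon> \<beta> z z' = (norm (snd z - snd z'))\<^sup>2 / \<epsilon> + (fst z - fst z')\<^sup>2 / \<beta>"

lemma C1_with_derivs_doubling_penalty:
  fixes w :: "real \<times> 'a::euclidean_space"
  shows "C1_with_derivs \<Omega> (\<lambda>z. doubling_penalty \<epsilon> \<beta> z w)
    (\<lambda>z. 2 * (fst z - fst w) / \<beta>) (\<lambda>z. (2 / \<epsilon>) *\<^sub>R (snd z - snd w))"
  unfolding C1_with_derivs_def
proof (intro conjI ballI)
  have eq: "(\<lambda>z. 2 * (fst z - fst w) / \<beta>) = (\<lambda>z. (2 / \<beta>) * (fst z - fst w))"
    by auto
  show "continuous_on \<Omega> (\<lambda>z. 2 * (fst z - fst w) / \<beta>)"
    unfolding eq by (intro continuous_intros)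
  show "continuous_on \<Omega> (\<lambda>z. (2 / \<epsilon>) *\<^sub>R (snd z - snd w))"
    by (intro continuous_intros)
  fix z :: "real \<times> 'a"
  show "((\<lambda>z. doubling_penalty \<epsilon> \<beta> z w) has_derivative
      (\<lambda>(h, k). 2 * (fst z - fst w) / \<beta> * h + inner ((2 / \<epsilon>) *\<^sub>R (snd z - snd w)) k)) (at z)"
    unfolding doubling_penalty_def power2_norm_eq_inner unfolding power2_eq_square
    by (auto intro!: derivative_eq_intros simp: fun_eq_iff inner_commute divide_inverse algebra_simps)
qed

lemma has_real_derivative_doubling_penalty:
  fixes y :: "real \<Rightarrow> 'a::real_inner"
  assumes "(y has_vector_derivative y') (at s within S)"
  shows "((\<lambda>s. doubling_penalty \<epsilon> \<beta> z (s, y s)) has_real_derivative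
      - (2 / \<epsilon>) * inner (snd z - y s) y' - 2 * (fst z - s) / \<beta>) (at s within S)"
  using assms
  unfolding doubling_penalty_def power2_norm_eq_inner has_vector_derivative_def has_field_derivative_def
  unfolding power2_eq_square
  by (auto intro!: derivative_eq_intros simp: fun_eq_iff inner_commute divide_inverse algebra_simps)

lemma abs_diff_power2_norm_le:
  fixes x p q :: "'a::real_normed_vector"
  assumes "norm x \<le> R" "norm p \<le> R" "norm q \<le> R"
  shows "\<bar>(norm (x - p))\<^sup>2 - (norm (x - q))\<^sup>2\<bar> \<le> 4 * R * norm (p - q)"
proof -
  have "(norm (x - p))\<^sup>2 - (norm (x - q))\<^sup>2 = (norm (x - p) - norm (x - q)) * (norm (x - p) + norm (x - q))"
    by (simp add: power2_eq_square algebra_simps)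
  then have "\<bar>(norm (x - p))\<^sup>2 - (norm (x - q))\<^sup>2\<bar> = \<bar>norm (x - p) - norm (x - q)\<bar> * (norm (x - p) + norm (x - q))"
    by (simp add: abs_mult)
  also have "\<dots> \<le> norm (p - q) * (4 * R)"
  proof (rule mult_mono)
    show "\<bar>norm (x - p) - norm (x - q)\<bar> \<le> norm (p - q)"
      using norm_triangle_ineq3[of "x - p" "x - q"] by (simp add: norm_minus_commute)
    show "norm (x - p) + norm (x - q) \<le> 4 * R"
      using norm_triangle_ineq4[of x p] norm_triangle_ineq4[of x q] assms by simp
  qed auto
  finally show ?thesis
    by (simp add: mult.commute)
qed

lemma doubling_penalty_increment_le:
  fixes q q' :: "'a::real_normed_vector"
  assumes "\<epsilon> > 0" "\<beta> > 0" "norm (snd z) \<le> R" "norm q \<le> R" "norm q' \<le> R"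
    and "\<bar>fst z\<bar> \<le> R" "\<bar>s\<bar> \<le> R" "\<bar>s'\<bar> \<le> R"
  shows "\<bar>doubling_penalty \<epsilon> \<beta> z (s', q') - doubling_penalty \<epsilon> \<beta> z (s, q)\<bar>
    \<le> 4 * R / \<epsilon> * norm (q' - q) + 4 * R / \<beta> * \<bar>s' - s\<bar>"
proof -
  define X where "X = (norm (snd z - q'))\<^sup>2 - (norm (snd z - q))\<^sup>2"
  define Y where "Y = (fst z - s')\<^sup>2 - (fst z - s)\<^sup>2"
  have X: "\<bar>X\<bar> \<le> 4 * R * norm (q' - q)"
    unfolding X_def by (rule abs_diff_power2_norm_le[OF assms(3,5,4)])
  have "\<bar>(norm (fst z - s'))\<^sup>2 - (norm (fst z - s))\<^sup>2\<bar> \<le> 4 * R * norm (s' - s)"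
    using assms(6-8) by (intro abs_diff_power2_norm_le) auto
  then have Y: "\<bar>Y\<bar> \<le> 4 * R * \<bar>s' - s\<bar>"
    by (simp add: Y_def)
  have "\<bar>doubling_penalty \<epsilon> \<beta> z (s', q') - doubling_penalty \<epsilon> \<beta> z (s, q)\<bar> = \<bar>X / \<epsilon> + Y / \<beta>\<bar>"
    by (simp add: doubling_penalty_def X_def Y_def diff_divide_distrib)
  also have "\<dots> \<le> \<bar>X\<bar> / \<epsilon> + \<bar>Y\<bar> / \<beta>"
    using abs_triangle_ineq[of "X / \<epsilon>" "Y / \<beta>"] assms(1,2) by simp
  also have "\<dots> \<le> 4 * R * norm (q' - q) / \<epsilon> + 4 * R * \<bar>s' - s\<bar> / \<beta>"
    using X Y assms(1,2) by (intro add_mono divide_right_mono) auto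
  finally show ?thesis
    by simp
qed

lemma doubling_penalty_bounds:
  fixes z z' :: "real \<times> 'a::real_normed_vector"
  assumes "\<epsilon> > 0" "\<beta> > 0"
  shows power2_norm_le_doubling_penalty: "(norm (snd z - snd z'))\<^sup>2 \<le> \<epsilon> * doubling_penalty \<epsilon> \<beta> z z'"
    and power2_fst_le_doubling_penalty: "(fst z - fst z')\<^sup>2 \<le> \<beta> * doubling_penalty \<epsilon> \<beta> z z'"
    and power2_dist_le_doubling_penalty: "\<beta> \<le> \<epsilon> \<Longrightarrow> (dist z z')\<^sup>2 \<le> 2 * \<epsilon> * doubling_penalty \<epsilon> \<beta> z z'"
proof -
  show snd: "(norm (snd z - snd z'))\<^sup>2 \<le> \<epsilon> * doubling_penalty \<epsilon> \<beta> z z'"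
    and fst: "(fst z - fst z')\<^sup>2 \<le> \<beta> * doubling_penalty \<epsilon> \<beta> z z'"
    using assms by (simp_all add: doubling_penalty_def field_simps add_increasing add_increasing2)
  assume "\<beta> \<le> \<epsilon>"
  have "(dist z z')\<^sup>2 = (fst z - fst z')\<^sup>2 + (norm (snd z - snd z'))\<^sup>2"
    unfolding dist_prod_def by (simp add: dist_real_def dist_norm)
  also have "\<dots> \<le> (\<beta> + \<epsilon>) * doubling_penalty \<epsilon> \<beta> z z'"
    using snd fst by (simp add: distrib_right)
  also have "\<dots> \<le> 2 * \<epsilon> * doubling_penalty \<epsilon> \<beta> z z'"
    using \<open>\<beta> \<le> \<epsilon>\<close> assms by (intro mult_right_mono) (auto simp: doubling_penalty_def)
  finally show "(dist z z')\<^sup>2 \<le> 2 * \<epsilon> * doubling_penalty \<epsilon> \<beta> z z'" .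
qed

text \<open>Here \<open>x\<close> is the maximum point, where the viscosity inequality holds, \<open>q = y s\<^sub>0\<close> and
  \<open>z = y s\<close> are points of the trajectory, and \<open>F\<close>, \<open>F\<^sub>0\<close> are the dynamics at \<open>z\<close> and at \<open>x\<close>.\<close>

lemma penalized_rate_lower_bound:
  fixes x q z F F\<^sub>0 :: "'a::real_inner"
  assumes visc: "0 \<le> (2 / \<epsilon>) * inner (x - q) F\<^sub>0 + 2 * (t - s\<^sub>0) / \<beta>"
    and "\<epsilon> > 0" "0 \<le> L" "0 \<le> \<theta>" "0 \<le> \<tau>"
    and "norm (z - q) \<le> \<theta>" "norm F \<le> B" "norm (F - F\<^sub>0) \<le> L * (\<theta> + norm (x - q)) + \<tau>"
    and "norm (x - q) \<le> R"
    and small: "(2 / \<epsilon>) * \<theta> * (B + R * L) \<le> c / 8" "(2 / \<epsilon>) * (R * \<tau> + L * (norm (x - q))\<^sup>2) \<le> c / 4"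
      "2 * (s - s\<^sub>0) / \<beta> \<le> c / 8"
  shows "c / 4 \<le> (2 / \<epsilon>) * inner (x - z) F + 2 * (t - s) / \<beta> + 3 * c / 4"
proof -
  define n where "n = norm (x - q)"
  have "\<bar>inner (q - z) F\<bar> \<le> \<theta> * B"
    using Cauchy_Schwarz_ineq2[of "q - z" F] assms(4,6,7)
    by (smt (verit, best) mult_mono norm_ge_zero norm_minus_commute)
  moreover have "\<bar>inner (x - q) (F - F\<^sub>0)\<bar> \<le> R * (L * \<theta> + \<tau>) + L * n\<^sup>2"
  proof -
    have "\<bar>inner (x - q) (F - F\<^sub>0)\<bar> \<le> n * (L * (\<theta> + n) + \<tau>)"
      using Cauchy_Schwarz_ineq2[of "x - q" "F - F\<^sub>0"] assms(8) unfolding n_def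
      by (meson mult_left_mono norm_ge_zero order_trans)
    also have "\<dots> = n * (L * \<theta> + \<tau>) + L * n\<^sup>2"
      by (simp add: algebra_simps power2_eq_square)
    also have "\<dots> \<le> R * (L * \<theta> + \<tau>) + L * n\<^sup>2"
      using assms(3,4,5,9) unfolding n_def by (intro add_right_mono mult_right_mono) auto
    finally show ?thesis .
  qed
  moreover have "inner (x - z) F = inner (x - q) F\<^sub>0 + inner (q - z) F + inner (x - q) (F - F\<^sub>0)"
    by (simp add: inner_diff_left inner_diff_right)
  ultimately have "inner (x - q) F\<^sub>0 - \<theta> * (B + R * L) - (R * \<tau> + L * n\<^sup>2) \<le> inner (x - z) F"
    by (simp add: algebra_simps)
  then have "(2 / \<epsilon>) * (inner (x - q) F\<^sub>0 - \<theta> * (B + R * L) - (R * \<tau> + L * n\<^sup>2))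
      \<le> (2 / \<epsilon>) * inner (x - z) F"
    using \<open>\<epsilon> > 0\<close> by (intro mult_left_mono) auto
  then have "(2 / \<epsilon>) * inner (x - q) F\<^sub>0 - (2 / \<epsilon>) * \<theta> * (B + R * L) - (2 / \<epsilon>) * (R * \<tau> + L * n\<^sup>2)
      \<le> (2 / \<epsilon>) * inner (x - z) F"
    by (simp only: right_diff_distrib mult.assoc)
  moreover have "2 * (t - s) / \<beta> = 2 * (t - s\<^sub>0) / \<beta> - 2 * (s - s\<^sub>0) / \<beta>"
    by (simp add: diff_divide_distrib algebra_simps)
  ultimately show ?thesis
    using visc small unfolding n_def by linarith
qed

lemma inner_le_hamiltonian:
  assumes "compact UU" "continuous_on UU (f t x)" "w \<in> UU"
  shows "inner (- p) (f t x w) \<le> hamiltonian f UU t x p"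
proof -
  have "compact ((\<lambda>w. inner (- p) (f t x w)) ` UU)"
    using assms(1,2) by (intro compact_continuous_image continuous_intros)
  then have "bdd_above ((\<lambda>w. inner (- p) (f t x w)) ` UU)"
    by (rule bounded_imp_bdd_above[OF compact_imp_bounded])
  then show ?thesis
    unfolding hamiltonian_def by (rule cSUP_upper[OF assms(3)])
qed

lemma viscosity_subsolution_penalized_max:
  fixes f :: "real \<Rightarrow> 'n::euclidean_space \<Rightarrow> 'm::euclidean_space \<Rightarrow> 'n"
  assumes vsub: "viscosity_subsolution f UU \<Omega> v"
    and "compact UU" "continuous_on UU (f t x)" "w \<in> UU" "(t, x) \<in> \<Omega>" "e > 0"
    and max: "\<And>z. z \<in> \<Omega> \<inter> ball (t, x) e \<Longrightarrow>
      v (fst z) (snd z) - doubling_penalty \<epsilon> \<beta> z (s\<^sub>0, q) \<le> v t x - doubling_penalty \<epsilon> \<beta> (t, x) (s\<^sub>0, q)"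
  shows "0 \<le> (2 / \<epsilon>) * inner (x - q) (f t x w) + 2 * (t - s\<^sub>0) / \<beta>"
proof -
  have "- (2 * (t - s\<^sub>0) / \<beta>) + hamiltonian f UU t x ((2 / \<epsilon>) *\<^sub>R (x - q)) \<le> 0"
    using vsub C1_with_derivs_doubling_penalty[of \<Omega> \<epsilon> \<beta> "(s\<^sub>0, q)"] \<open>(t, x) \<in> \<Omega>\<close> \<open>e > 0\<close> max
    unfolding viscosity_subsolution_def by fastforce
  moreover have "inner (- ((2 / \<epsilon>) *\<^sub>R (x - q))) (f t x w) \<le> hamiltonian f UU t x ((2 / \<epsilon>) *\<^sub>R (x - q))"
    using assms(2-4) by (rule inner_le_hamiltonian)
  ultimately show ?thesis
    by simp
qed

lemma compact_neighbourhood_in_open: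
  fixes K :: "'a::euclidean_space set"
  assumes "compact K" "open \<Omega>" "K \<subseteq> \<Omega>"
  obtains D r where "compact D" "D \<subseteq> \<Omega>" "r > 0" "\<And>k z. k \<in> K \<Longrightarrow> dist k z \<le> r \<Longrightarrow> z \<in> D"
proof -
  obtain r where "r > 0" and r: "(\<Union>k\<in>K. cball k r) \<subseteq> \<Omega>"
    using compact_subset_open_imp_cball_epsilon_subset[OF assms] by blast
  define D where "D = {k + w | k w. k \<in> K \<and> w \<in> cball 0 r}"
  have D_iff: "z \<in> D \<longleftrightarrow> (\<exists>k\<in>K. dist k z \<le> r)" for z
  proof
    assume "z \<in> D"
    then obtain k w where "z = k + w" "k \<in> K" "w \<in> cball 0 r"
      unfolding D_def by blast
    then show "\<exists>k\<in>K. dist k z \<le> r"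
      by (intro bexI[of _ k]) (auto simp: dist_norm)
  next
    assume "\<exists>k\<in>K. dist k z \<le> r"
    then obtain k where "k \<in> K" "dist k z \<le> r"
      by blast
    then have "z = k + (z - k)" "z - k \<in> cball 0 r"
      by (auto simp: dist_norm norm_minus_commute)
    with \<open>k \<in> K\<close> show "z \<in> D"
      unfolding D_def by blast
  qed
  show thesis
  proof (rule that)
    show "compact D"
      unfolding D_def by (rule compact_sums[OF \<open>compact K\<close> compact_cball])
    show "D \<subseteq> \<Omega>"
      using r by (auto simp: D_iff)
  qed (use \<open>r > 0\<close> D_iff in auto)
qed

lemma penalized_maximum:
  fixes V :: "real \<times> 'a::real_normed_vector \<Rightarrow> real"
  assumes "compact D" "continuous_on D V" "continuous_on {a..b} y" "a \<le> b" "\<epsilon> > 0" "\<beta> > 0"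
    and graph: "\<And>s. s \<in> {a..b} \<Longrightarrow> (s, y s) \<in> D"
  obtains z s where "z \<in> D" "s \<in> {a..b}"
    "\<And>z' s'. z' \<in> D \<Longrightarrow> s' \<in> {a..b} \<Longrightarrow>
      V z' - doubling_penalty \<epsilon> \<beta> z' (s', y s') + c * s' \<le> V z - doubling_penalty \<epsilon> \<beta> z (s, y s) + c * s"
proof -
  define \<Phi> where "\<Phi> p = V (fst p) - doubling_penalty \<epsilon> \<beta> (fst p) (snd p, y (snd p)) + c * snd p" for p
  have "continuous_on (D \<times> {a..b}) \<Phi>"
    unfolding \<Phi>_def doubling_penalty_def
    by (intro continuous_intros continuous_on_compose2[OF assms(2)] continuous_on_compose2[OF assms(3)])
      (use assms(5,6) in auto)
  moreover have "compact (D \<times> {a..b})"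
    using assms(1) by (intro compact_Times) auto
  moreover have "D \<times> {a..b} \<noteq> {}"
    using assms(4) graph[of a] by auto
  ultimately obtain p where "p \<in> D \<times> {a..b}" "\<And>p'. p' \<in> D \<times> {a..b} \<Longrightarrow> \<Phi> p' \<le> \<Phi> p"
    using continuous_attains_sup by metis
  then show thesis
    by (intro that[of "fst p" "snd p"]) (auto simp: \<Phi>_def mem_Times_iff)
qed

section \<open>Subsolutions do not decrease along trajectories\<close>

locale controlled_trajectory =
  fixes T L a b :: real and UU :: "'m::euclidean_space set"
    and f :: "real \<Rightarrow> 'n::euclidean_space \<Rightarrow> 'm \<Rightarrow> 'n"
    and y :: "real \<Rightarrow> 'n" and u :: "real \<Rightarrow> 'm" and N :: "real set"
  assumes UU_compact: "compact UU"
    and f_cont: "continuous_on ({0..T} \<times> UNIV \<times> UU) (\<lambda>(s, x, w). f s x w)"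
    and f_lipschitz: "\<And>s w x x'. s \<in> {0..T} \<Longrightarrow> w \<in> UU \<Longrightarrow> norm (f s x w - f s x' w) \<le> L * norm (x - x')"
    and L_nonneg: "0 \<le> L"
    and interval: "0 \<le> a" "a \<le> b" "b \<le> T"
    and y_ac: "abs_continuous_on a b y"
    and N_negligible: "negligible N"
    and y_deriv: "\<And>s. s \<in> {a..b} \<Longrightarrow> s \<notin> N \<Longrightarrow>
      u s \<in> UU \<and> (y has_vector_derivative f s (y s) (u s)) (at s within {a..b})"
begin

lemma y_continuous: "continuous_on {a..b} y"
  by (rule abs_continuous_on_imp_continuous_on[OF y_ac])

lemma f_continuous_on_compact:
  "continuous_on ({0..T} \<times> cball 0 R \<times> UU) (\<lambda>(s, x, w). f s x w)"
  by (rule continuous_on_subset[OF f_cont]) auto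

lemma compact_state_control_set: "compact ({0..T} \<times> cball (0::'n) R \<times> UU)"
  by (intro compact_Times compact_Icc compact_cball UU_compact)

lemma f_bounded:
  obtains B where "\<And>s x w. s \<in> {0..T} \<Longrightarrow> norm x \<le> R \<Longrightarrow> w \<in> UU \<Longrightarrow> norm (f s x w) \<le> B"
proof -
  obtain B where "\<forall>p\<in>{0..T} \<times> cball 0 R \<times> UU. norm ((\<lambda>(s, x, w). f s x w) p) \<le> B"
    using compact_imp_bounded[OF compact_continuous_image[OF f_continuous_on_compact compact_state_control_set[of R]]]
    unfolding bounded_iff by auto
  then show thesis
    by (intro that[of B]) auto
qed

lemma f_time_modulus:
  assumes "\<tau> > 0"
  obtains \<rho> where "\<rho> > 0" "\<And>s s' x w. s \<in> {0..T} \<Longrightarrow> s' \<in> {0..T} \<Longrightarrow> norm x \<le> R \<Longrightarrow> w \<in> UU \<Longrightarrow>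
    \<bar>s - s'\<bar> < \<rho> \<Longrightarrow> norm (f s x w - f s' x w) < \<tau>"
proof -
  have "uniformly_continuous_on ({0..T} \<times> cball 0 R \<times> UU) (\<lambda>(s, x, w). f s x w)"
    by (rule compact_uniformly_continuous[OF f_continuous_on_compact compact_state_control_set[of R]])
  then obtain \<rho> where "\<rho> > 0" and \<rho>: "\<And>p p'. p \<in> {0..T} \<times> cball 0 R \<times> UU \<Longrightarrow> p' \<in> {0..T} \<times> cball 0 R \<times> UU \<Longrightarrow>
      dist p' p < \<rho> \<Longrightarrow> dist ((\<lambda>(s, x, w). f s x w) p') ((\<lambda>(s, x, w). f s x w) p) < \<tau>"
    using \<open>\<tau> > 0\<close> unfolding uniformly_continuous_on_def by metis
  show thesis
  proof (rule that[OF \<open>\<rho> > 0\<close>])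
    fix s s' :: real and x :: 'n and w :: 'm
    assume "s \<in> {0..T}" "s' \<in> {0..T}" "norm x \<le> R" "w \<in> UU" "\<bar>s - s'\<bar> < \<rho>"
    then show "norm (f s x w - f s' x w) < \<tau>"
      using \<rho>[of "(s', x, w)" "(s, x, w)"] by (simp add: dist_Pair_Pair dist_norm)
  qed
qed

lemma f_continuous_in_control: "t \<in> {0..T} \<Longrightarrow> continuous_on UU (f t x)"
  by (rule continuous_on_compose2[OF f_cont, of UU "\<lambda>w. (t, x, w)", simplified])
    (auto intro!: continuous_intros)

lemma f_perturbation:
  assumes "s \<in> {0..T}" "w \<in> UU" "norm (f s x w - f t x w) \<le> \<tau>"
  shows "norm (f s z w - f t x w) \<le> L * norm (z - x) + \<tau>"
  using f_lipschitz[OF assms(1,2), of z x] norm_triangle_ineq[of "f s z w - f s x w" "f s x w - f t x w"] assms(3)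
  by simp

lemma abs_continuous_on_penalized:
  assumes "a \<le> s\<^sub>1" "s\<^sub>2 \<le> b" "\<epsilon> > 0" "\<beta> > 0" "t \<in> {0..T}"
    and R: "norm x \<le> R" "\<And>s. s \<in> {a..b} \<Longrightarrow> norm (y s) \<le> R"
  shows "abs_continuous_on s\<^sub>1 s\<^sub>2 (\<lambda>s. c * s - doubling_penalty \<epsilon> \<beta> (t, x) (s, y s))"
proof (rule abs_continuous_on_increment_le[of _ _ y "4 * (R + T) / \<epsilon>" "4 * (R + T) / \<beta> + \<bar>c\<bar>"])
  show "abs_continuous_on s\<^sub>1 s\<^sub>2 y"
    using y_ac assms(1,2) by (rule abs_continuous_on_subinterval)
  have "R \<ge> 0"
    using R(1) norm_ge_zero order_trans by blast
  then show "0 \<le> 4 * (R + T) / \<epsilon>" "0 \<le> 4 * (R + T) / \<beta> + \<bar>c\<bar>"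
    using assms(3,4) interval by auto
  fix s s' assume "s\<^sub>1 \<le> s" "s \<le> s'" "s' \<le> s\<^sub>2"
  then have "s \<in> {a..b}" "s' \<in> {a..b}"
    using assms(1,2) by auto
  define \<Delta> where "\<Delta> = doubling_penalty \<epsilon> \<beta> (t, x) (s', y s') - doubling_penalty \<epsilon> \<beta> (t, x) (s, y s)"
  have "\<bar>\<Delta>\<bar> \<le> 4 * (R + T) / \<epsilon> * norm (y s' - y s) + 4 * (R + T) / \<beta> * \<bar>s' - s\<bar>"
    unfolding \<Delta>_def using assms(3-5) R(1) R(2)[of s] R(2)[of s'] \<open>R \<ge> 0\<close> interval \<open>s \<in> {a..b}\<close> \<open>s' \<in> {a..b}\<close>
    by (intro doubling_penalty_increment_le) auto
  then have "\<bar>\<Delta>\<bar> \<le> 4 * (R + T) / \<epsilon> * norm (y s' - y s) + 4 * (R + T) / \<beta> * (s' - s)"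
    using \<open>s \<le> s'\<close> by simp
  moreover have "(c * s' - doubling_penalty \<epsilon> \<beta> (t, x) (s', y s')) - (c * s - doubling_penalty \<epsilon> \<beta> (t, x) (s, y s))
      = c * (s' - s) - \<Delta>"
    by (simp add: \<Delta>_def algebra_simps)
  moreover have "\<bar>c * (s' - s) - \<Delta>\<bar> \<le> \<bar>c\<bar> * (s' - s) + \<bar>\<Delta>\<bar>"
    using abs_triangle_ineq4[of "c * (s' - s)" \<Delta>] \<open>s \<le> s'\<close> by (simp add: abs_mult)
  moreover have "(4 * (R + T) / \<beta> + \<bar>c\<bar>) * (s' - s) = 4 * (R + T) / \<beta> * (s' - s) + \<bar>c\<bar> * (s' - s)"
    by (rule distrib_right)
  ultimately show "\<bar>(c * s' - doubling_penalty \<epsilon> \<beta> (t, x) (s', y s')) - (c * s - doubling_penalty \<epsilon> \<beta> (t, x) (s, y s))\<bar>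
      \<le> 4 * (R + T) / \<epsilon> * norm (y s' - y s) + (4 * (R + T) / \<beta> + \<bar>c\<bar>) * (s' - s)"
    by linarith
qed

lemma penalized_increase:
  fixes x :: 'n
  assumes "a \<le> s\<^sub>0" "s\<^sub>0 < b" "\<epsilon> > 0" "\<beta> > 0" "c > 0" "t \<in> {0..T}"
    and visc: "\<And>w. w \<in> UU \<Longrightarrow> 0 \<le> (2 / \<epsilon>) * inner (x - y s\<^sub>0) (f t x w) + 2 * (t - s\<^sub>0) / \<beta>"
    and R: "norm x \<le> R" "\<And>s. s \<in> {a..b} \<Longrightarrow> norm (y s) \<le> R"
    and B: "\<And>s z w. s \<in> {0..T} \<Longrightarrow> norm z \<le> R \<Longrightarrow> w \<in> UU \<Longrightarrow> norm (f s z w) \<le> B"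
    and \<tau>: "0 \<le> \<tau>" "\<And>s w. s \<in> {0..T} \<Longrightarrow> \<bar>s - t\<bar> < \<rho> \<Longrightarrow> w \<in> UU \<Longrightarrow> norm (f s x w - f t x w) \<le> \<tau>"
    and "\<bar>t - s\<^sub>0\<bar> < \<rho>"
    and small: "(2 / \<epsilon>) * (2 * R * \<tau> + L * (norm (x - y s\<^sub>0))\<^sup>2) \<le> c / 4"
  shows "\<exists>s\<in>{s\<^sub>0<..b}. c * s\<^sub>0 - doubling_penalty \<epsilon> \<beta> (t, x) (s\<^sub>0, y s\<^sub>0) < c * s - doubling_penalty \<epsilon> \<beta> (t, x) (s, y s)"
proof -
  define \<psi> where "\<psi> s = c * s - doubling_penalty \<epsilon> \<beta> (t, x) (s, y s)" for s
  have "R \<ge> 0"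
    using R(1) norm_ge_zero order_trans by blast
  define \<theta> where "\<theta> = c * \<epsilon> / (16 * (\<bar>B\<bar> + 2 * R * L + 1))"
  have "0 \<le> 2 * R * L"
    using \<open>R \<ge> 0\<close> L_nonneg by simp
  then have den: "0 < \<bar>B\<bar> + 2 * R * L + 1"
    using abs_ge_zero[of B] by linarith
  then have "\<theta> > 0"
    using \<open>c > 0\<close> \<open>\<epsilon> > 0\<close> unfolding \<theta>_def by simp
  have \<theta>_small: "(2 / \<epsilon>) * \<theta> * (B + 2 * R * L) \<le> c / 8"
  proof -
    have "(2 / \<epsilon>) * \<theta> * (B + 2 * R * L) \<le> (2 / \<epsilon>) * \<theta> * (\<bar>B\<bar> + 2 * R * L + 1)"
      using \<open>\<theta> > 0\<close> \<open>\<epsilon> > 0\<close> by (intro mult_left_mono) auto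
    also have "\<dots> = c / 8"
      using \<open>\<epsilon> > 0\<close> den by (simp add: \<theta>_def field_simps)
    finally show ?thesis .
  qed
  obtain \<kappa> where "\<kappa> > 0" and \<kappa>: "\<And>s. s \<in> {a..b} \<Longrightarrow> dist s s\<^sub>0 < \<kappa> \<Longrightarrow> dist (y s) (y s\<^sub>0) < \<theta>"
    using y_continuous \<open>\<theta> > 0\<close> assms(1,2) unfolding continuous_on_iff by (metis atLeastAtMost_iff less_imp_le)
  define m where "m = min (b - s\<^sub>0) (min \<kappa> (min (\<rho> - \<bar>t - s\<^sub>0\<bar>) (c * \<beta> / 16)))"
  have "m > 0" "m \<le> b - s\<^sub>0" "m \<le> \<kappa>" "m \<le> \<rho> - \<bar>t - s\<^sub>0\<bar>"
    using assms(2,4,5) \<open>\<kappa> > 0\<close> \<open>\<bar>t - s\<^sub>0\<bar> < \<rho>\<close> by (auto simp: m_def)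
  have "m \<le> c * \<beta> / 16"
    unfolding m_def by (intro min.coboundedI2) simp
  define h where "h = m / 2"
  have h: "h > 0" "s\<^sub>0 + h \<le> b" "h < \<kappa>" "h < \<rho> - \<bar>t - s\<^sub>0\<bar>" "h \<le> c * \<beta> / 16"
    using \<open>m > 0\<close> \<open>m \<le> b - s\<^sub>0\<close> \<open>m \<le> \<kappa>\<close> \<open>m \<le> \<rho> - \<bar>t - s\<^sub>0\<bar>\<close> \<open>m \<le> c * \<beta> / 16\<close>
    unfolding h_def by linarith+
  have sub: "{s\<^sub>0..s\<^sub>0 + h} \<subseteq> {a..b}"
    using assms(1) h(2) by auto
  have "abs_continuous_on s\<^sub>0 (s\<^sub>0 + h) \<psi>"
    unfolding \<psi>_def using assms(1) h(2) assms(3,4,6) R by (rule abs_continuous_on_penalized)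
  moreover have "\<exists>g>c / 4. (\<psi> has_real_derivative g) (at s within {s\<^sub>0..s\<^sub>0 + h})"
    if s: "s \<in> {s\<^sub>0..<s\<^sub>0 + h}" "s \<notin> N" for s
  proof -
    have "s \<in> {a..b}" "s \<in> {0..T}"
      using s sub interval by auto
    then have "u s \<in> UU" and y': "(y has_vector_derivative f s (y s) (u s)) (at s within {s\<^sub>0..s\<^sub>0 + h})"
      using y_deriv[of s] s(2) has_vector_derivative_within_subset[OF _ sub] by auto
    define F where "F = f s (y s) (u s)"
    have "norm (y s - y s\<^sub>0) \<le> \<theta>"
      using \<kappa>[OF \<open>s \<in> {a..b}\<close>] s(1) h(3) by (simp add: dist_norm dist_real_def)
    moreover have "norm (F - f t x (u s)) \<le> L * (\<theta> + norm (x - y s\<^sub>0)) + \<tau>"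
    proof -
      have "s\<^sub>0 \<le> s" "s < s\<^sub>0 + h"
        using s(1) by auto
      then have "\<bar>s - t\<bar> < \<rho>"
        using h(4) by arith
      then have "norm (F - f t x (u s)) \<le> L * norm (y s - x) + \<tau>"
        unfolding F_def using \<tau>(2) \<open>s \<in> {0..T}\<close> \<open>u s \<in> UU\<close> by (intro f_perturbation) auto
      also have "\<dots> \<le> L * (\<theta> + norm (x - y s\<^sub>0)) + \<tau>"
        using \<open>norm (y s - y s\<^sub>0) \<le> \<theta>\<close> norm_triangle_ineq[of "y s - y s\<^sub>0" "y s\<^sub>0 - x"] L_nonneg
        by (intro add_right_mono mult_left_mono) (auto simp: norm_minus_commute)
      finally show ?thesis .
    qed
    moreover have "norm F \<le> B"
      unfolding F_def using B \<open>s \<in> {0..T}\<close> R(2) \<open>s \<in> {a..b}\<close> \<open>u s \<in> UU\<close> by blast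
    moreover have "norm (x - y s\<^sub>0) \<le> 2 * R"
      using R assms(1,2) norm_triangle_ineq4[of x "y s\<^sub>0"] by force
    moreover have "2 * (s - s\<^sub>0) / \<beta> \<le> c / 8"
      using s(1) h(5) assms(4) by (simp add: field_simps)
    ultimately have "c / 4 \<le> (2 / \<epsilon>) * inner (x - y s) F + 2 * (t - s) / \<beta> + 3 * c / 4"
      using visc[OF \<open>u s \<in> UU\<close>] \<theta>_small small assms(3) L_nonneg \<open>\<theta> > 0\<close> \<tau>(1)
      by (intro penalized_rate_lower_bound[where L = L and \<theta> = \<theta> and B = B and \<tau> = \<tau> and R = "2 * R"]) auto
    moreover have "(\<psi> has_real_derivative c + (2 / \<epsilon>) * inner (x - y s) F + 2 * (t - s) / \<beta>) (at s within {s\<^sub>0..s\<^sub>0 + h})"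
      unfolding \<psi>_def F_def using has_real_derivative_doubling_penalty[OF y', of \<epsilon> \<beta> "(t, x)"]
      by (auto intro!: derivative_eq_intros)
    ultimately show ?thesis
      using \<open>c > 0\<close> by (intro exI[of _ "c + (2 / \<epsilon>) * inner (x - y s) F + 2 * (t - s) / \<beta>"]) auto
  qed
  ultimately have "\<psi> s\<^sub>0 + c / 4 * h \<le> \<psi> (s\<^sub>0 + h)"
    using abs_continuous_on_deriv_gt_imp_le[of s\<^sub>0 "s\<^sub>0 + h" \<psi> N "c / 4"] h(1) N_negligible by auto
  moreover have "0 < c / 4 * h"
    using h(1) \<open>c > 0\<close> by simp
  ultimately have "\<psi> s\<^sub>0 < \<psi> (s\<^sub>0 + h)"
    by linarith
  then show ?thesis
    using h(1,2) by (intro bexI[of _ "s\<^sub>0 + h"]) (auto simp: \<psi>_def)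
qed

end

locale near_graph_setting = controlled_trajectory +
  fixes v :: "real \<Rightarrow> 'n::euclidean_space \<Rightarrow> real" and \<Omega> D :: "(real \<times> 'n) set" and r M R B :: real
  assumes \<Omega>_sub: "\<Omega> \<subseteq> {0..T} \<times> UNIV"
    and vsub: "viscosity_subsolution f UU \<Omega> v"
    and D_compact: "compact D" and D_sub: "D \<subseteq> \<Omega>" and r_pos: "r > 0"
    and near_graph: "\<And>s z. s \<in> {a..b} \<Longrightarrow> dist (s, y s) z \<le> r \<Longrightarrow> z \<in> D"
    and v_cont: "continuous_on D (\<lambda>z. v (fst z) (snd z))"
    and M: "\<And>z. z \<in> D \<Longrightarrow> \<bar>v (fst z) (snd z)\<bar> \<le> M"
    and R: "\<And>z. z \<in> D \<Longrightarrow> norm (snd z) \<le> R"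
    and B: "\<And>s x w. s \<in> {0..T} \<Longrightarrow> norm x \<le> R \<Longrightarrow> w \<in> UU \<Longrightarrow> norm (f s x w) \<le> B"
begin

lemma graph_in_D: "s \<in> {a..b} \<Longrightarrow> (s, y s) \<in> D"
  using near_graph[of s "(s, y s)"] r_pos by simp

lemma y_bounded: "s \<in> {a..b} \<Longrightarrow> norm (y s) \<le> R"
  using R[OF graph_in_D] by simp

lemma bounds_nonneg: "0 \<le> M" "0 \<le> R"
  using M[OF graph_in_D[of a]] y_bounded[of a] interval(2) norm_ge_zero[of "y a"]
  by (auto simp del: norm_ge_zero)

lemma penalized_max_viscosity:
  assumes "(t, x) \<in> D" "s\<^sub>0 \<in> {a..b}" "dist (t, x) (s\<^sub>0, y s\<^sub>0) < r / 2" "w \<in> UU"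
    and max: "\<And>z. z \<in> D \<Longrightarrow>
      v (fst z) (snd z) - doubling_penalty \<epsilon> \<beta> z (s\<^sub>0, y s\<^sub>0) \<le> v t x - doubling_penalty \<epsilon> \<beta> (t, x) (s\<^sub>0, y s\<^sub>0)"
  shows "0 \<le> (2 / \<epsilon>) * inner (x - y s\<^sub>0) (f t x w) + 2 * (t - s\<^sub>0) / \<beta>"
proof -
  have "ball (t, x) (r / 2) \<subseteq> D"
  proof
    fix z assume "z \<in> ball (t, x) (r / 2)"
    then have "dist (s\<^sub>0, y s\<^sub>0) z \<le> r"
      using assms(3) dist_triangle[of "(s\<^sub>0, y s\<^sub>0)" z "(t, x)"] by (simp add: dist_commute)
    then show "z \<in> D"
      using near_graph assms(2) by blast
  qed
  with max have "v (fst z) (snd z) - doubling_penalty \<epsilon> \<beta> z (s\<^sub>0, y s\<^sub>0) \<le> v t x - doubling_penalty \<epsilon> \<beta> (t, x) (s\<^sub>0, y s\<^sub>0)"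
    if "z \<in> \<Omega> \<inter> ball (t, x) (r / 2)" for z
    using that by blast
  moreover have "(t, x) \<in> \<Omega>" "t \<in> {0..T}"
    using assms(1) D_sub \<Omega>_sub by auto
  ultimately show ?thesis
    using r_pos
    by (intro viscosity_subsolution_penalized_max[OF vsub UU_compact f_continuous_in_control assms(4), of t x "r / 2"])
      auto
qed

theorem value_nondecreasing: "v a (y a) \<le> v b (y b)"
proof (rule ccontr)
  assume decrease: "\<not> v a (y a) \<le> v b (y b)"
  define V where "V z = v (fst z) (snd z)" for z
  define \<delta> where "\<delta> = V (a, y a) - V (b, y b)"
  have "\<delta> > 0" "a < b"
    using decrease interval(2) by (auto simp: \<delta>_def V_def order.order_iff_strict)
  define c where "c = \<delta> / 3 / (b - a)"
  have "c > 0"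
    using \<open>\<delta> > 0\<close> \<open>a < b\<close> by (simp add: c_def)
  have "c * (b - a) = \<delta> / 3"
    using \<open>a < b\<close> unfolding c_def by (simp add: field_simps)
  have V_cont: "continuous_on D V"
    using v_cont by (simp add: V_def)
  have "M \<ge> 0" "R \<ge> 0"
    by (fact bounds_nonneg)+
  define \<eta> where "\<eta> = min (\<delta> / 3) (c / (16 * (L + 1)))"
  have "\<eta> > 0"
    using \<open>\<delta> > 0\<close> \<open>c > 0\<close> L_nonneg by (simp add: \<eta>_def)
  obtain \<rho>\<^sub>V where "\<rho>\<^sub>V > 0" and \<rho>\<^sub>V: "\<And>z z'. z \<in> D \<Longrightarrow> z' \<in> D \<Longrightarrow> dist z' z < \<rho>\<^sub>V \<Longrightarrow> dist (V z') (V z) < \<eta>"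
    using compact_uniformly_continuous[OF V_cont D_compact] \<open>\<eta> > 0\<close>
    unfolding uniformly_continuous_on_def by metis
  define \<rho> where "\<rho> = min \<rho>\<^sub>V (r / 2)"
  define \<epsilon> where "\<epsilon> = \<rho>\<^sup>2 / (4 * M + 4)"
  define \<tau> where "\<tau> = c * \<epsilon> / (32 * (R + 1))"
  have "\<rho> > 0" "\<epsilon> > 0" "\<tau> > 0"
    using \<open>\<rho>\<^sub>V > 0\<close> r_pos \<open>M \<ge> 0\<close> \<open>R \<ge> 0\<close> \<open>c > 0\<close> by (auto simp: \<rho>_def \<epsilon>_def \<tau>_def)
  obtain \<rho>\<^sub>f where "\<rho>\<^sub>f > 0" and \<rho>\<^sub>f: "\<And>s s' x w. s \<in> {0..T} \<Longrightarrow> s' \<in> {0..T} \<Longrightarrow> norm x \<le> R \<Longrightarrow> w \<in> UU \<Longrightarrow>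
      \<bar>s - s'\<bar> < \<rho>\<^sub>f \<Longrightarrow> norm (f s x w - f s' x w) < \<tau>"
    using f_time_modulus[OF \<open>\<tau> > 0\<close>] by blast
  define \<beta> where "\<beta> = min \<epsilon> (\<rho>\<^sub>f\<^sup>2 / (4 * M + 4))"
  have "\<beta> > 0" "\<beta> \<le> \<epsilon>"
    using \<open>\<epsilon> > 0\<close> \<open>\<rho>\<^sub>f > 0\<close> \<open>M \<ge> 0\<close> by (auto simp: \<beta>_def)
  obtain t x s\<^sub>0 where "(t, x) \<in> D" "s\<^sub>0 \<in> {a..b}" and max: "\<And>z s. z \<in> D \<Longrightarrow> s \<in> {a..b} \<Longrightarrow>
      V z - doubling_penalty \<epsilon> \<beta> z (s, y s) + c * s \<le> V (t, x) - doubling_penalty \<epsilon> \<beta> (t, x) (s\<^sub>0, y s\<^sub>0) + c * s\<^sub>0"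
    using penalized_maximum[OF D_compact V_cont y_continuous interval(2) \<open>\<epsilon> > 0\<close> \<open>\<beta> > 0\<close> graph_in_D]
    by (metis prod.collapse)
  define P where "P = doubling_penalty \<epsilon> \<beta> (t, x) (s\<^sub>0, y s\<^sub>0)"
  have P: "P \<le> V (t, x) - V (s\<^sub>0, y s\<^sub>0)"
    using max[OF graph_in_D[OF \<open>s\<^sub>0 \<in> {a..b}\<close>] \<open>s\<^sub>0 \<in> {a..b}\<close>] by (simp add: P_def doubling_penalty_def)
  then have "P \<le> 2 * M"
    using M[OF \<open>(t, x) \<in> D\<close>] M[OF graph_in_D[OF \<open>s\<^sub>0 \<in> {a..b}\<close>]] by (simp add: V_def)
  have "(dist (t, x) (s\<^sub>0, y s\<^sub>0))\<^sup>2 \<le> 2 * \<epsilon> * P"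
    unfolding P_def by (rule power2_dist_le_doubling_penalty[OF \<open>\<epsilon> > 0\<close> \<open>\<beta> > 0\<close> \<open>\<beta> \<le> \<epsilon>\<close>])
  also have "\<dots> \<le> 2 * \<epsilon> * (2 * M)"
    using \<open>P \<le> 2 * M\<close> \<open>\<epsilon> > 0\<close> by (intro mult_left_mono) auto
  also have "\<dots> < \<rho>\<^sup>2"
    using \<open>M \<ge> 0\<close> \<open>\<rho> > 0\<close> by (simp add: \<epsilon>_def field_simps)
  finally have close: "dist (t, x) (s\<^sub>0, y s\<^sub>0) < \<rho>"
    by (rule power_less_imp_less_base) (use \<open>\<rho> > 0\<close> in simp)
  then have "V (t, x) - V (s\<^sub>0, y s\<^sub>0) < \<eta>"
    using \<rho>\<^sub>V[OF graph_in_D[OF \<open>s\<^sub>0 \<in> {a..b}\<close>] \<open>(t, x) \<in> D\<close>] by (simp add: \<rho>_def dist_real_def)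
  with P have "P < \<eta>"
    by linarith
  have P_nonneg: "P \<ge> 0"
    unfolding P_def doubling_penalty_def using \<open>\<epsilon> > 0\<close> \<open>\<beta> > 0\<close> by simp
  have "(t - s\<^sub>0)\<^sup>2 \<le> \<beta> * P"
    using power2_fst_le_doubling_penalty[OF \<open>\<epsilon> > 0\<close> \<open>\<beta> > 0\<close>, of "(t, x)" "(s\<^sub>0, y s\<^sub>0)"] by (simp add: P_def)
  also have "\<dots> \<le> \<beta> * (2 * M)"
    using \<open>P \<le> 2 * M\<close> \<open>\<beta> > 0\<close> by (intro mult_left_mono) auto
  also have "\<dots> \<le> \<rho>\<^sub>f\<^sup>2 / (4 * M + 4) * (2 * M)"
    using \<open>M \<ge> 0\<close> by (intro mult_right_mono) (auto simp: \<beta>_def)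
  also have "\<dots> < \<rho>\<^sub>f\<^sup>2"
    using \<open>M \<ge> 0\<close> \<open>\<rho>\<^sub>f > 0\<close> by (simp add: field_simps add_pos_nonneg)
  finally have "\<bar>t - s\<^sub>0\<bar>\<^sup>2 < \<rho>\<^sub>f\<^sup>2"
    by simp
  then have "\<bar>t - s\<^sub>0\<bar> < \<rho>\<^sub>f"
    by (rule power_less_imp_less_base) (use \<open>\<rho>\<^sub>f > 0\<close> in simp)
  have "t \<in> {0..T}" "norm x \<le> R"
    using \<open>(t, x) \<in> D\<close> D_sub \<Omega>_sub R by auto
  have visc: "0 \<le> (2 / \<epsilon>) * inner (x - y s\<^sub>0) (f t x w) + 2 * (t - s\<^sub>0) / \<beta>" if "w \<in> UU" for w
    using penalized_max_viscosity[OF \<open>(t, x) \<in> D\<close> \<open>s\<^sub>0 \<in> {a..b}\<close> _ that] close max[OF _ \<open>s\<^sub>0 \<in> {a..b}\<close>]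
    by (simp add: \<rho>_def V_def)
  show False
  proof (cases "s\<^sub>0 = b")
    case True
    have "V (a, y a) + c * a \<le> V (t, x) - P + c * b"
      using max[OF graph_in_D, of a a] True \<open>a < b\<close> by (simp add: P_def doubling_penalty_def)
    moreover have "c * b - c * a = \<delta> / 3"
      using \<open>c * (b - a) = \<delta> / 3\<close> by (simp add: right_diff_distrib)
    moreover have "\<eta> \<le> \<delta> / 3"
      unfolding \<eta>_def by (rule min.cobounded1)
    moreover have "V (t, x) - V (b, y b) < \<eta>"
      using \<open>V (t, x) - V (s\<^sub>0, y s\<^sub>0) < \<eta>\<close> True by simp
    ultimately show False
      using P_nonneg \<open>\<delta> > 0\<close> unfolding \<delta>_def by argo
  next
    case False
    have "(2 / \<epsilon>) * (2 * R * \<tau>) = c / 8 * (R / (R + 1))"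
      using \<open>\<epsilon> > 0\<close> \<open>R \<ge> 0\<close> by (simp add: \<tau>_def field_simps)
    also have "\<dots> \<le> c / 8"
      using \<open>c > 0\<close> \<open>R \<ge> 0\<close> by (intro mult_left_le) auto
    finally have R_part: "(2 / \<epsilon>) * (2 * R * \<tau>) \<le> c / 8" .
    have "(2 / \<epsilon>) * (L * (norm (x - y s\<^sub>0))\<^sup>2) \<le> (2 / \<epsilon>) * (L * (\<epsilon> * P))"
      using power2_norm_le_doubling_penalty[OF \<open>\<epsilon> > 0\<close> \<open>\<beta> > 0\<close>, of "(t, x)" "(s\<^sub>0, y s\<^sub>0)"] L_nonneg \<open>\<epsilon> > 0\<close>
      unfolding P_def by (intro mult_left_mono) auto
    also have "\<dots> = 2 * L * P"
      using \<open>\<epsilon> > 0\<close> by simp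
    also have "\<dots> \<le> 2 * L * (c / (16 * (L + 1)))"
    proof (rule mult_left_mono)
      have "\<eta> \<le> c / (16 * (L + 1))"
        unfolding \<eta>_def by (rule min.cobounded2)
      with \<open>P < \<eta>\<close> show "P \<le> c / (16 * (L + 1))"
        by (meson less_le_trans less_imp_le)
    qed (use L_nonneg in simp)
    also have "\<dots> = c / 8 * (L / (L + 1))"
      using L_nonneg by (simp add: field_simps)
    also have "\<dots> \<le> c / 8"
      using \<open>c > 0\<close> L_nonneg by (intro mult_left_le) auto
    finally have "(2 / \<epsilon>) * (2 * R * \<tau> + L * (norm (x - y s\<^sub>0))\<^sup>2) \<le> c / 4"
      using R_part by (simp add: distrib_left)
    then obtain s where "s \<in> {s\<^sub>0<..b}" "c * s\<^sub>0 - P < c * s - doubling_penalty \<epsilon> \<beta> (t, x) (s, y s)"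
      using penalized_increase[of s\<^sub>0 \<epsilon> \<beta> c t x R B \<tau> \<rho>\<^sub>f] False \<open>s\<^sub>0 \<in> {a..b}\<close> \<open>\<epsilon> > 0\<close> \<open>\<beta> > 0\<close> \<open>c > 0\<close>
        \<open>t \<in> {0..T}\<close> visc \<open>norm x \<le> R\<close> y_bounded B \<open>\<tau> > 0\<close> \<rho>\<^sub>f \<open>\<bar>t - s\<^sub>0\<bar> < \<rho>\<^sub>f\<close>
      unfolding P_def by (auto simp: less_imp_le abs_minus_commute)
    with max[OF \<open>(t, x) \<in> D\<close>, of s] \<open>s\<^sub>0 \<in> {a..b}\<close> show False
      unfolding P_def by auto
  qed
qed

end

theorem (in controlled_trajectory) subsolution_nondecreasing_along_trajectory:
  fixes v :: "real \<Rightarrow> 'n \<Rightarrow> real"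
  assumes \<Omega>: "open \<Omega>" "\<Omega> \<subseteq> {0..T} \<times> UNIV"
    and v_cont: "continuous_on \<Omega> (\<lambda>z. v (fst z) (snd z))"
    and vsub: "viscosity_subsolution f UU \<Omega> v"
    and graph: "\<And>s. s \<in> {a..b} \<Longrightarrow> (s, y s) \<in> \<Omega>"
  shows "v a (y a) \<le> v b (y b)"
proof -
  have "compact ((\<lambda>s. (s, y s)) ` {a..b})"
    by (intro compact_continuous_image continuous_intros y_continuous) auto
  then obtain D r where D: "compact D" "D \<subseteq> \<Omega>" "r > 0"
    and near_image: "\<And>k z. k \<in> (\<lambda>s. (s, y s)) ` {a..b} \<Longrightarrow> dist k z \<le> r \<Longrightarrow> z \<in> D"
    by (rule compact_neighbourhood_in_open[OF _ \<Omega>(1)]) (use graph in blast)+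
  from near_image have near_graph: "\<And>s z. s \<in> {a..b} \<Longrightarrow> dist (s, y s) z \<le> r \<Longrightarrow> z \<in> D"
    by blast
  have v_cont_D: "continuous_on D (\<lambda>z. v (fst z) (snd z))"
    using continuous_on_subset[OF v_cont \<open>D \<subseteq> \<Omega>\<close>] .
  obtain M where M: "\<And>z. z \<in> D \<Longrightarrow> \<bar>v (fst z) (snd z)\<bar> \<le> M"
    using compact_imp_bounded[OF compact_continuous_image[OF v_cont_D \<open>compact D\<close>]] by (auto simp: bounded_iff)
  obtain R where R: "\<And>z. z \<in> D \<Longrightarrow> norm (snd z) \<le> R"
    using compact_imp_bounded[OF compact_continuous_image[OF continuous_on_snd[OF continuous_on_id] \<open>compact D\<close>]]
    by (auto simp: bounded_iff)
  obtain B where B: "\<And>s x w. s \<in> {0..T} \<Longrightarrow> norm x \<le> R \<Longrightarrow> w \<in> UU \<Longrightarrow> norm (f s x w) \<le> B"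
    using f_bounded by blast
  interpret near_graph_setting T L a b UU f y u N v \<Omega> D r M R B
    by (intro near_graph_setting.intro controlled_trajectory_axioms near_graph_setting_axioms.intro)
      (use \<Omega>(2) vsub D near_graph v_cont_D M R B in auto)
  show ?thesis
    by (rule value_nondecreasing)
qed

text \<open>The first zero \<open>\<tau>\<close> of \<open>w\<close> after \<open>t\<^sub>1\<close> yields the interval: \<open>a\<close> is any point before \<open>\<tau>\<close>
  and \<open>b\<close> is taken so close to \<open>\<tau>\<close> that \<open>w b < w a\<close>.\<close>

lemma continuous_on_positive_decrease_before_zero:
  fixes w :: "real \<Rightarrow> real"
  assumes "t\<^sub>1 \<le> t\<^sub>2" and cont: "continuous_on {t\<^sub>1..t\<^sub>2} w" and "w t\<^sub>1 > 0" "w t\<^sub>2 \<le> 0"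
  obtains a b where "t\<^sub>1 < a" "a < b" "b < t\<^sub>2" "\<And>s. s \<in> {a..b} \<Longrightarrow> w s > 0" "w b < w a"
proof -
  define S where "S = {t\<^sub>1..t\<^sub>2} \<inter> w -` {..0}"
  have "closed S"
    unfolding S_def by (rule continuous_closed_preimage[OF cont]) auto
  moreover have "t\<^sub>2 \<in> S" "bdd_below S"
    using assms(1,4) unfolding S_def by (auto intro: bdd_belowI[of _ t\<^sub>1])
  ultimately have "Inf S \<in> S" and Inf_le: "\<And>s. s \<in> S \<Longrightarrow> Inf S \<le> s"
    by (auto intro: closed_contains_Inf cInf_lower)
  define \<tau> where "\<tau> = Inf S"
  have \<tau>: "\<tau> \<in> {t\<^sub>1..t\<^sub>2}" "w \<tau> \<le> 0"
    using \<open>Inf S \<in> S\<close> by (auto simp: S_def \<tau>_def)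
  with \<open>w t\<^sub>1 > 0\<close> have "t\<^sub>1 < \<tau>"
    by (cases "\<tau> = t\<^sub>1") auto
  have pos: "w s > 0" if "s \<in> {t\<^sub>1..t\<^sub>2}" "s < \<tau>" for s
    using Inf_le[of s] that unfolding S_def \<tau>_def by force
  define a where "a = (t\<^sub>1 + \<tau>) / 2"
  have "t\<^sub>1 < a" "a < \<tau>" "w a > 0"
    using \<open>t\<^sub>1 < \<tau>\<close> \<tau>(1) pos[of a] by (auto simp: a_def)
  then obtain d where "d > 0" and d: "\<And>s. s \<in> {t\<^sub>1..t\<^sub>2} \<Longrightarrow> dist s \<tau> < d \<Longrightarrow> dist (w s) (w \<tau>) < w a - w \<tau>"
    using cont \<tau> unfolding continuous_on_iff by (metis diff_gt_0_iff_gt order_le_less_trans)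
  define b where "b = max ((a + \<tau>) / 2) (\<tau> - d / 2)"
  have "a < b" "b < \<tau>" "dist b \<tau> < d" "b \<in> {t\<^sub>1..t\<^sub>2}"
    using \<open>t\<^sub>1 < a\<close> \<open>a < \<tau>\<close> \<open>d > 0\<close> \<tau>(1) by (auto simp: b_def dist_real_def less_max_iff_disj le_max_iff_disj)
  show thesis
  proof (rule that[of a b])
    show "w b < w a"
      using d[OF \<open>b \<in> {t\<^sub>1..t\<^sub>2}\<close> \<open>dist b \<tau> < d\<close>] by (simp add: dist_real_def)
    show "w s > 0" if "s \<in> {a..b}" for s
      using that pos[of s] \<open>t\<^sub>1 < a\<close> \<open>b < \<tau>\<close> \<tau>(1) by auto
  qed (use \<open>t\<^sub>1 < a\<close> \<open>a < b\<close> \<open>b < \<tau>\<close> \<tau>(1) in auto)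
qed

lemma open_positivity_region:
  fixes T :: real and v :: "real \<Rightarrow> 'a::topological_space \<Rightarrow> real"
  assumes "continuous_on ({0..T} \<times> UNIV) (\<lambda>(t, x). v t x)"
  shows "open {(t, x). t \<in> {0<..<T} \<and> v t x > 0}"
proof -
  have "continuous_on ({0<..<T} \<times> UNIV) (\<lambda>(t, x). v t x)"
    by (rule continuous_on_subset[OF assms]) auto
  then have "open ({0<..<T} \<times> UNIV \<inter> (\<lambda>(t, x). v t x) -` {0<..})"
    by (intro continuous_open_preimage) (auto intro: open_Times open_greaterThan)
  moreover have "{0<..<T} \<times> UNIV \<inter> (\<lambda>(t, x). v t x) -` {0<..} = {(t, x). t \<in> {0<..<T} \<and> v t x > 0}"
    by auto
  ultimately show ?thesis
    by simp
qed

lemma AE_lebesgue_onE: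
  assumes "AE s in lebesgue_on {a..b::real}. P s"
  obtains N where "negligible N" "\<And>s. s \<in> {a..b} \<Longrightarrow> s \<notin> N \<Longrightarrow> P s"
proof -
  from assms obtain N where N: "{s \<in> space (lebesgue_on {a..b}). \<not> P s} \<subseteq> N"
    "N \<in> null_sets (lebesgue_on {a..b})"
    by (auto elim: AE_E simp: null_sets_def)
  then have "negligible N"
    using null_sets_restrict_space[of "{a..b}" lebesgue N] by (simp add: negligible_iff_null_sets)
  with N(1) show ?thesis
    using that by auto
qed

lemma trajectory_restriction:
  assumes "compact UU" "continuous_on ({0..T} \<times> UNIV \<times> UU) (\<lambda>(s, x, w). f s x w)"
    and "\<exists>L. \<forall>s\<in>{0..T}. \<forall>w\<in>UU. \<forall>x x'. norm (f s x w - f s x' w) \<le> L * norm (x - x')"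
    and "u \<in> controls UU t\<^sub>1 t\<^sub>2" "is_trajectory f t\<^sub>1 t\<^sub>2 x\<^sub>0 u y"
    and "0 \<le> t\<^sub>1" "t\<^sub>1 \<le> a" "a \<le> b" "b \<le> t\<^sub>2" "t\<^sub>2 \<le> T"
  obtains L N where "controlled_trajectory T L a b UU f y u N"
proof -
  obtain L where L: "\<forall>s\<in>{0..T}. \<forall>w\<in>UU. \<forall>x x'. norm (f s x w - f s x' w) \<le> L * norm (x - x')"
    using assms(3) by blast
  have lip: "norm (f s x w - f s x' w) \<le> \<bar>L\<bar> * norm (x - x')" if "s \<in> {0..T}" "w \<in> UU" for s w x x'
    using L that by (meson abs_ge_self mult_right_mono norm_ge_zero order_trans)
  obtain N where "negligible N"
    and y': "\<And>s. s \<in> {t\<^sub>1..t\<^sub>2} \<Longrightarrow> s \<notin> N \<Longrightarrow> (y has_vector_derivative f s (y s) (u s)) (at s within {t\<^sub>1..t\<^sub>2})"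
    using assms(5) unfolding is_trajectory_def by (auto elim: AE_lebesgue_onE)
  have "controlled_trajectory T \<bar>L\<bar> a b UU f y u N"
  proof
    show "abs_continuous_on a b y"
      using assms(5,7,9) unfolding is_trajectory_def by (auto intro: abs_continuous_on_subinterval)
    show "u s \<in> UU \<and> (y has_vector_derivative f s (y s) (u s)) (at s within {a..b})"
      if "s \<in> {a..b}" "s \<notin> N" for s
      using that assms(4,7,9) y'[of s] has_vector_derivative_within_subset[of y _ s "{t\<^sub>1..t\<^sub>2}" "{a..b}"]
      unfolding controls_def by auto
  qed (use assms(1,2,6-10) lip \<open>negligible N\<close> in auto)
  then show thesis
    by (rule that)
qed

theorem corollary2:
  fixes T :: real
    and UU :: "'m::euclidean_space set"
    and f :: "real \<Rightarrow> 'n::euclidean_space \<Rightarrow> 'm \<Rightarrow> 'n"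
    and g gl :: "'n \<Rightarrow> real"
    and vl :: "real \<Rightarrow> 'n \<Rightarrow> real"
    and t1 t2 :: real
    and xbar :: 'n
    and u :: "real \<Rightarrow> 'm"
    and y :: "real \<Rightarrow> 'n"
  assumes T_pos: "T > 0"
    and U_compact: "compact UU" and U_ne: "UU \<noteq> {}"
    and f_cont: "continuous_on ({0..T} \<times> UNIV \<times> UU) (\<lambda>(s, x, w). f s x w)"
    and f_lip: "\<exists>L. \<forall>s\<in>{0..T}. \<forall>w\<in>UU. \<forall>x x'. norm (f s x w - f s x' w) \<le> L * norm (x - x')"
    and g_cont: "continuous_on UNIV g"
    and vl_cont: "continuous_on ({0..T} \<times> UNIV) (\<lambda>(t, x). vl t x)"
    and vl_sub: "viscosity_subsolution f UU {(t, x). t \<in> {0<..<T} \<and> vl t x > 0} vl"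
    and vl_T: "\<forall>x. vl T x = gl x"
    and gl_X: "\<forall>x\<in>{x. g x \<le> 0}. gl x \<le> 0"
    and t12: "0 \<le> t1" "t1 \<le> t2" "t2 \<le> T"
    and xbar_out: "xbar \<notin> {x. vl t1 x \<le> 0}"
    and u_adm: "u \<in> controls UU t1 t2"
    and y_traj: "is_trajectory f t1 t2 xbar u y"
  shows "y t2 \<notin> {x. vl t2 x \<le> 0}"
proof
  assume "y t2 \<in> {x. vl t2 x \<le> 0}"
  have "continuous_on {t1..t2} (\<lambda>s. vl s (y s))"
    using t12 y_traj abs_continuous_on_imp_continuous_on unfolding is_trajectory_def
    by (intro continuous_on_compose2[OF vl_cont, of _ "\<lambda>s. (s, y s)", simplified] continuous_intros) auto
  moreover have "vl t1 (y t1) > 0" "vl t2 (y t2) \<le> 0"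
    using xbar_out y_traj \<open>y t2 \<in> {x. vl t2 x \<le> 0}\<close> unfolding is_trajectory_def by auto
  ultimately obtain a b where "t1 < a" "a < b" "b < t2" and pos: "\<And>s. s \<in> {a..b} \<Longrightarrow> vl s (y s) > 0"
    and "vl b (y b) < vl a (y a)"
    using continuous_on_positive_decrease_before_zero[OF t12(2)] by blast
  obtain L N where "controlled_trajectory T L a b UU f y u N"
    using trajectory_restriction[OF U_compact f_cont f_lip u_adm y_traj] t12 \<open>t1 < a\<close> \<open>a < b\<close> \<open>b < t2\<close>
    by (meson less_imp_le)
  then have "vl a (y a) \<le> vl b (y b)"
  proof (rule controlled_trajectory.subsolution_nondecreasing_along_trajectory[OF _ open_positivity_region[OF vl_cont] _ _ vl_sub])
    show "continuous_on {(t, x). t \<in> {0<..<T} \<and> vl t x > 0} (\<lambda>z. vl (fst z) (snd z))"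
      by (rule continuous_on_subset[OF vl_cont[unfolded split_def]]) auto
  qed (use pos \<open>t1 < a\<close> \<open>b < t2\<close> t12 in auto)
  with \<open>vl b (y b) < vl a (y a)\<close> show False
    by simp
qed

end
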